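(* Let $H=(U,(A_1,\dots,A_m))$ be a harmonic set system with $|U|\le m$. Then one of the following holds: (1) $A_1=\cdots=A_m$; (2) $H$ is isomorphic to $([m],(\{1\},\{2\},\dots,\{m\}))$ or to its complement; (3) $m=3$ and $H$ is isomorphic to $([2],(\{1\},\{2\},\{1\}))$ or $([3],(\{1\},\{2\},\{1\}))$ or $([3],(\{1,2\},\{2,3\},\{1,2\}))$; (4) $m=5$ and $H$ is isomorphic to $([5],(\{1,4\},\{2,5\},\{1,3\},\{4,5\},\{1,2\}))$ or to its complement.
   Context: For $I\subseteq[m]$, $H_I=\bigcap_{i\in I}A_i$ ($=U$ if $I=\emptyset$). The run decomposition of a finite set $I$ of positive integers is the partition of sizes, in nonincreasing order, of the maximal runs of consecutive integers in $I$. $H$ is harmonic if $|H_I|=|H_J|$ whenever $I,J\subseteq[m]$ have the same run decomposition. Set systems $(U,(A_1,\dots,A_m))$ and $(V,(B_1,\dots,B_m))$ are isomorphic if there is a bijection $\sigma:U\to V$ with $\sigma(A_i)=B_i$ for all $i$ (the order of the sets is preserved). The complement of $(U,(A_1,\dots,A_m))$ is $(U,(U\setminus A_1,\dots,U\setminus A_m))$. *)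

theory Defs
  imports Main "HOL-Library.Multiset"
begin

text \<open>A set system (U,(A_1,...,A_m)) is represented by a finite ground set U
  and a function A :: nat => 'a set, of which only A 1, ..., A m are relevant.\<close>

definition set_system :: "'a set \<Rightarrow> nat \<Rightarrow> (nat \<Rightarrow> 'a set) \<Rightarrow> bool" where
  "set_system U m A \<longleftrightarrow> finite U \<and> (\<forall>i\<in>{1..m}. A i \<subseteq> U)"

definition HI :: "'a set \<Rightarrow> (nat \<Rightarrow> 'a set) \<Rightarrow> nat set \<Rightarrow> 'a set" where
  "HI U A I = {x \<in> U. \<forall>i\<in>I. x \<in> A i}"

definition max_runs :: "nat set \<Rightarrow> (nat \<times> nat) set" where
  "max_runs I = {(a, b). a \<le> b \<and> {a..b} \<subseteq> I \<and> (a = 0 \<or> a - 1 \<notin> I) \<and> b + 1 \<notin> I}"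

text \<open>Run decomposition: the multiset of the sizes of the maximal runs
  (a partition, i.e. the sizes listed in nonincreasing order).\<close>
definition run_decomp :: "nat set \<Rightarrow> nat multiset" where
  "run_decomp I = image_mset (\<lambda>(a, b). b - a + 1) (mset_set (max_runs I))"

definition harmonic :: "'a set \<Rightarrow> nat \<Rightarrow> (nat \<Rightarrow> 'a set) \<Rightarrow> bool" where
  "harmonic U m A \<longleftrightarrow> (\<forall>I J. I \<subseteq> {1..m} \<longrightarrow> J \<subseteq> {1..m} \<longrightarrow>
       run_decomp I = run_decomp J \<longrightarrow> card (HI U A I) = card (HI U A J))"

definition iso_sys :: "'a set \<Rightarrow> (nat \<Rightarrow> 'a set) \<Rightarrow> 'b set \<Rightarrow> (nat \<Rightarrow> 'b set) \<Rightarrow> nat \<Rightarrow> bool" where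
  "iso_sys U A V B m \<longleftrightarrow> (\<exists>\<sigma>. bij_betw \<sigma> U V \<and> (\<forall>i\<in>{1..m}. \<sigma> ` A i = B i))"

definition compl_sys :: "'a set \<Rightarrow> (nat \<Rightarrow> 'a set) \<Rightarrow> (nat \<Rightarrow> 'a set)" where
  "compl_sys U A = (\<lambda>i. U - A i)"

definition fam :: "'b set list \<Rightarrow> nat \<Rightarrow> 'b set" where
  "fam L i = L ! (i - 1)"

end

theory Submission
  imports Defs "HOL-Combinatorics.Cycles"
begin

section \<open>Runs\<close>

lemma max_runs_iff:
  "(a, b) \<in> max_runs I \<longleftrightarrow>
     a \<le> b \<and> {a..b} \<subseteq> I \<and> (\<forall>c. Suc c = a \<longrightarrow> c \<notin> I) \<and> Suc b \<notin> I"
  unfolding max_runs_def by (cases a) auto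

lemma max_runs_subset: "max_runs I \<subseteq> I \<times> I"
  unfolding max_runs_def by auto

lemma finite_max_runs: "finite I \<Longrightarrow> finite (max_runs I)"
  using max_runs_subset by (metis finite_SigmaI finite_subset)

lemma max_runs_shift:
  assumes "0 \<notin> I"
  shows "max_runs ((\<lambda>x. x + t) ` I) = (\<lambda>(a, b). (a + t, b + t)) ` max_runs I"
proof safe
  fix a b assume "(a, b) \<in> max_runs ((\<lambda>x. x + t) ` I)"
  then have ab: "a \<le> b" "{a..b} \<subseteq> (\<lambda>x. x + t) ` I" "\<forall>c. Suc c = a \<longrightarrow> c \<notin> (\<lambda>x. x + t) ` I"
      "Suc b \<notin> (\<lambda>x. x + t) ` I"
    by (auto simp: max_runs_iff)
  then obtain a' where a': "a' \<in> I" "a = a' + t" by auto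
  with assms have "0 < a'" by (cases a') auto
  have "{a'..b - t} \<subseteq> I"
  proof
    fix x assume "x \<in> {a'..b - t}"
    then have "x + t \<in> (\<lambda>x. x + t) ` I" using ab(1,2) a' by auto
    then show "x \<in> I" by auto
  qed
  with ab a' \<open>0 < a'\<close> have "(a', b - t) \<in> max_runs I"
    unfolding max_runs_iff by (auto simp: image_iff)
  then show "(a, b) \<in> (\<lambda>(a, b). (a + t, b + t)) ` max_runs I"
    using ab(1) a' by (auto intro!: image_eqI[where x = "(a', b - t)"])
next
  fix a b assume "(a, b) \<in> max_runs I"
  then have ab: "a \<le> b" "{a..b} \<subseteq> I" "\<forall>c. Suc c = a \<longrightarrow> c \<notin> I" "Suc b \<notin> I"
    by (auto simp: max_runs_iff)
  have "{a + t..b + t} \<subseteq> (\<lambda>x. x + t) ` I"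
  proof
    fix x assume "x \<in> {a + t..b + t}"
    then have "x - t \<in> {a..b}" "x = (x - t) + t" by auto
    then show "x \<in> (\<lambda>x. x + t) ` I" using ab(2) by blast
  qed
  with ab show "(a + t, b + t) \<in> max_runs ((\<lambda>x. x + t) ` I)"
    unfolding max_runs_iff by auto
qed

lemma run_decomp_shift:
  assumes "0 \<notin> I"
  shows "run_decomp ((\<lambda>x. x + t) ` I) = run_decomp I"
proof -
  have "inj_on (\<lambda>(a, b). (a + t, b + t)) (max_runs I)"
    by (auto simp: inj_on_def)
  then show ?thesis
    unfolding run_decomp_def max_runs_shift[OF assms]
    by (simp add: image_mset_mset_set[symmetric] multiset.map_comp case_prod_beta' comp_def)
qed

lemma max_runs_eq_if_overlap:
  assumes "(a, b) \<in> max_runs I" "(a', b') \<in> max_runs I" "x \<in> {a..b}" "x \<in> {a'..b'}"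
  shows "(a, b) = (a', b')"
proof -
  have "b' \<le> b" "a \<le> a'"
    if "(a, b) \<in> max_runs I" "(a', b') \<in> max_runs I" "x \<in> {a..b}" "x \<in> {a'..b'}"
    for a b a' b'
  proof -
    from that have "{a..b} \<subseteq> I" "{a'..b'} \<subseteq> I" "Suc b \<notin> I" "\<forall>c. Suc c = a \<longrightarrow> c \<notin> I"
      by (auto simp: max_runs_iff)
    show "b' \<le> b"
    proof (rule ccontr)
      assume "\<not> b' \<le> b"
      then have "Suc b \<in> {a'..b'}" using that(3,4) by auto
      then show False using \<open>{a'..b'} \<subseteq> I\<close> \<open>Suc b \<notin> I\<close> by blast
    qed
    show "a \<le> a'"
    proof (rule ccontr)
      assume "\<not> a \<le> a'"
      then have "a - 1 \<in> {a'..b'}" "Suc (a - 1) = a" using that(3,4) by auto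
      then show False using \<open>{a'..b'} \<subseteq> I\<close> \<open>\<forall>c. Suc c = a \<longrightarrow> c \<notin> I\<close> by blast
    qed
  qed
  from this[OF assms] this[OF assms(2,1,4,3)] show ?thesis by simp
qed

lemma ex_max_run:
  assumes "finite I" "x \<in> I"
  shows "\<exists>(a, b) \<in> max_runs I. x \<in> {a..b}"
proof -
  define L where "L = {a. a \<le> x \<and> {a..x} \<subseteq> I}"
  define R where "R = {b. x \<le> b \<and> {x..b} \<subseteq> I}"
  have "R \<subseteq> I" unfolding R_def by auto
  then have "finite L" "finite R" "x \<in> L" "x \<in> R"
    using assms unfolding L_def R_def by (auto intro: finite_subset)
  define a where "a = Min L"
  define b where "b = Max R"
  have "a \<in> L" "b \<in> R"
    unfolding a_def b_def using \<open>x \<in> L\<close> \<open>x \<in> R\<close> Min_in[OF \<open>finite L\<close>] Max_in[OF \<open>finite R\<close>]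
    by auto
  have "c \<notin> I" if "Suc c = a" for c
  proof
    assume "c \<in> I"
    moreover have "c \<le> x" "{a..x} \<subseteq> I" using \<open>a \<in> L\<close> that unfolding L_def by auto
    moreover have "{c..x} = insert c {a..x}" using atLeastAtMost_insertL \<open>c \<le> x\<close> that by blast
    ultimately have "c \<in> L" unfolding L_def by simp
    then have "a \<le> c" unfolding a_def using \<open>finite L\<close> by simp
    with that show False by simp
  qed
  moreover have "Suc b \<notin> I"
  proof
    assume "Suc b \<in> I"
    moreover have "x \<le> b" "{x..b} \<subseteq> I" using \<open>b \<in> R\<close> unfolding R_def by auto
    moreover have "{x..Suc b} = insert (Suc b) {x..b}" using atLeastAtMostSuc_conv \<open>x \<le> b\<close> by simp
    ultimately have "Suc b \<in> R" unfolding R_def by simp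
    then have "Suc b \<le> b" unfolding b_def using \<open>finite R\<close> by simp
    then show False by simp
  qed
  moreover have "a \<le> x" "x \<le> b" "{a..x} \<union> {x..b} \<subseteq> I"
    using \<open>a \<in> L\<close> \<open>b \<in> R\<close> unfolding L_def R_def by auto
  moreover have "{a..b} \<subseteq> {a..x} \<union> {x..b}" by auto
  ultimately have "(a, b) \<in> max_runs I" unfolding max_runs_iff by auto
  with \<open>a \<le> x\<close> \<open>x \<le> b\<close> show ?thesis by auto
qed

lemma card_eq_sum_run_decomp:
  assumes "finite I"
  shows "card I = sum_mset (run_decomp I)"
proof -
  have "I = (\<Union>r \<in> max_runs I. {fst r..snd r})"
  proof
    show "I \<subseteq> (\<Union>r \<in> max_runs I. {fst r..snd r})"
      using ex_max_run[OF assms] by fastforce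
    show "(\<Union>r \<in> max_runs I. {fst r..snd r}) \<subseteq> I"
      by (auto simp: max_runs_def)
  qed
  moreover have "{fst r..snd r} \<inter> {fst s..snd s} = {}"
    if "r \<in> max_runs I" "s \<in> max_runs I" "r \<noteq> s" for r s
  proof (rule ccontr)
    assume "{fst r..snd r} \<inter> {fst s..snd s} \<noteq> {}"
    then obtain x where "x \<in> {fst r..snd r}" "x \<in> {fst s..snd s}" by blast
    then have "(fst r, snd r) = (fst s, snd s)"
      using max_runs_eq_if_overlap[of "fst r" "snd r" I "fst s" "snd s"] that(1,2) by simp
    with that(3) show False by simp
  qed
  then have "card (\<Union>r \<in> max_runs I. {fst r..snd r}) = (\<Sum>r \<in> max_runs I. card {fst r..snd r})"
    by (intro card_UN_disjoint) (auto simp: finite_max_runs[OF assms])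
  ultimately have "card I = (\<Sum>r \<in> max_runs I. card {fst r..snd r})" by simp
  also have "\<dots> = sum_mset (run_decomp I)"
    unfolding run_decomp_def sum_unfold_sum_mset[symmetric]
    by (intro sum.cong) (auto simp: max_runs_def)
  finally show ?thesis .
qed

definition adjacencies :: "nat set \<Rightarrow> nat" where
  "adjacencies I = card {i \<in> I. Suc i \<in> I}"

lemma adjacencies_eq:
  assumes "finite I"
  shows "adjacencies I = card I - size (run_decomp I)"
proof -
  have "{i \<in> I. Suc i \<notin> I} = snd ` max_runs I"
  proof safe
    fix i assume "i \<in> I" "Suc i \<notin> I"
    then obtain a b where ab: "(a, b) \<in> max_runs I" "i \<in> {a..b}"
      using ex_max_run[OF assms] by blast
    then have "{a..b} \<subseteq> I" by (simp add: max_runs_iff)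
    have "b = i"
    proof (rule ccontr)
      assume "b \<noteq> i"
      then have "Suc i \<in> {a..b}" using ab(2) by auto
      with \<open>{a..b} \<subseteq> I\<close> \<open>Suc i \<notin> I\<close> show False by blast
    qed
    with ab show "i \<in> snd ` max_runs I" by force
  qed (auto simp: max_runs_iff)
  moreover have "inj_on snd (max_runs I)"
  proof (rule inj_onI)
    fix r s assume rs: "r \<in> max_runs I" "s \<in> max_runs I" "snd r = snd s"
    obtain a b a' b' where "r = (a, b)" "s = (a', b')" by force
    with rs show "r = s"
      using max_runs_eq_if_overlap[of a b I a' b' b] by (auto simp: max_runs_def)
  qed
  ultimately have "card {i \<in> I. Suc i \<notin> I} = size (run_decomp I)"
    unfolding run_decomp_def by (simp add: card_image)
  moreover have "card I = card ({i \<in> I. Suc i \<in> I} \<union> {i \<in> I. Suc i \<notin> I})"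
    by (rule arg_cong[where f = card]) auto
  then have "card I = adjacencies I + card {i \<in> I. Suc i \<notin> I}"
    unfolding adjacencies_def using assms by (subst (asm) card_Un_disjoint) auto
  ultimately show ?thesis by simp
qed

lemma card_adjacencies_eq_if_run_decomp_eq:
  assumes "finite I" "finite J" "run_decomp I = run_decomp J"
  shows "card I = card J" "adjacencies I = adjacencies J"
  using assms by (simp_all add: card_eq_sum_run_decomp adjacencies_eq)

lemma max_runs_atLeastAtMost: "a \<le> b \<Longrightarrow> max_runs {a..b} = {(a, b)}"
  by (auto simp: max_runs_def)

lemma run_decomp_atLeastAtMost: "a \<le> b \<Longrightarrow> run_decomp {a..b} = {#b - a + 1#}"
  by (simp add: run_decomp_def max_runs_atLeastAtMost)

lemma run_decomp_singleton: "run_decomp {a} = {#1#}"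
  using run_decomp_atLeastAtMost[of a a] by simp

definition separated :: "nat set \<Rightarrow> nat set \<Rightarrow> bool" where
  "separated A B \<longleftrightarrow> (\<forall>x\<in>A. \<forall>y\<in>B. Suc x < y)"

lemma interval_subset_separated_Un:
  assumes "separated A B" "{a..b} \<subseteq> A \<union> B" "a \<le> b"
  shows "{a..b} \<subseteq> A \<or> {a..b} \<subseteq> B"
proof -
  have step: "Suc i \<in> C" if "i \<in> C" "Suc i \<in> A \<union> B" "C = A \<or> C = B" for i C
    using assms(1) that unfolding separated_def by fastforce
  have "a + k \<in> C" if "a \<in> C" "C = A \<or> C = B" "a + k \<le> b" for k C
    using that
  proof (induction k)
    case (Suc k)
    then have "a + k \<in> C" by simp
    moreover have "Suc (a + k) \<in> {a..b}" using Suc.prems(3) by simp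
    then have "Suc (a + k) \<in> A \<union> B" using assms(2) by blast
    ultimately show ?case using step Suc.prems(2) by simp
  qed simp
  then have "{a..b} \<subseteq> C" if "a \<in> C" "C = A \<or> C = B" for C
    using that by (metis atLeastAtMost_iff le_add_diff_inverse subsetI)
  moreover have "a \<in> A \<union> B" using assms(2,3) by auto
  ultimately show ?thesis by blast
qed

lemma max_runs_separated_Un:
  assumes "separated A B"
  shows "max_runs (A \<union> B) = max_runs A \<union> max_runs B"
proof safe
  fix a b assume "(a, b) \<in> max_runs (A \<union> B)" "(a, b) \<notin> max_runs B"
  with interval_subset_separated_Un[OF assms] show "(a, b) \<in> max_runs A"
    by (auto simp: max_runs_iff)
next
  fix a b assume ab: "(a, b) \<in> max_runs A"
  then have "a \<in> A" "b \<in> A" by (auto simp: max_runs_iff)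
  then have "c \<notin> B" if "Suc c = a" for c
    using assms that unfolding separated_def by force
  moreover have "Suc b \<notin> B" using \<open>b \<in> A\<close> assms unfolding separated_def by force
  ultimately show "(a, b) \<in> max_runs (A \<union> B)" using ab by (auto simp: max_runs_iff)
next
  fix a b assume ab: "(a, b) \<in> max_runs B"
  then have "a \<in> B" "b \<in> B" by (auto simp: max_runs_iff)
  then have "c \<notin> A" if "Suc c = a" for c
    using assms that unfolding separated_def by force
  moreover have "Suc b \<notin> A" using \<open>b \<in> B\<close> assms unfolding separated_def by force
  ultimately show "(a, b) \<in> max_runs (A \<union> B)" using ab by (auto simp: max_runs_iff)
qed

lemma run_decomp_separated_Un:
  assumes "finite A" "finite B" "separated A B"
  shows "run_decomp (A \<union> B) = run_decomp A + run_decomp B"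
proof -
  have "max_runs A \<inter> max_runs B = {}"
  proof (rule ccontr)
    assume "max_runs A \<inter> max_runs B \<noteq> {}"
    then obtain a b where "(a, b) \<in> max_runs A" "(a, b) \<in> max_runs B" by auto
    then have "a \<in> A" "a \<in> B" using max_runs_subset by auto
    with assms(3) show False unfolding separated_def by force
  qed
  then show ?thesis
    unfolding run_decomp_def max_runs_separated_Un[OF assms(3)]
    by (simp add: mset_set_Union finite_max_runs assms(1,2))
qed

lemma run_decomp_two_points:
  assumes "Suc a < b"
  shows "run_decomp {a, b} = {#1, 1#}"
proof -
  have "run_decomp {a, b} = run_decomp ({a} \<union> {b})" by (rule arg_cong[where f = run_decomp]) auto
  also have "\<dots> = run_decomp {a} + run_decomp {b}"
    using assms by (intro run_decomp_separated_Un) (auto simp: separated_def)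
  finally show ?thesis by (simp add: run_decomp_singleton)
qed

section \<open>The shift permutation\<close>

lemma eq_if_sums_over_supersets_eq:
  fixes l r :: "'b set \<Rightarrow> 'c::cancel_comm_monoid_add"
  assumes "finite W"
    and sums_eq: "\<And>P. P \<subseteq> W \<Longrightarrow>
      (\<Sum>Q | P \<subseteq> Q \<and> Q \<subseteq> W. l Q) = (\<Sum>Q | P \<subseteq> Q \<and> Q \<subseteq> W. r Q)"
  shows "P \<subseteq> W \<Longrightarrow> l P = r P"
proof (induction "card (W - P)" arbitrary: P rule: less_induct)
  case less
  define S where "S = {Q. P \<subseteq> Q \<and> Q \<subseteq> W}"
  have "finite S" unfolding S_def using \<open>finite W\<close> by (auto intro: finite_subset[of _ "Pow W"])
  have "P \<in> S" unfolding S_def using less.prems by auto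
  have "l Q = r Q" if "Q \<in> S - {P}" for Q
  proof -
    from that have "P \<subset> Q" "Q \<subseteq> W" unfolding S_def by auto
    then have "card (W - Q) < card (W - P)"
      using \<open>finite W\<close> by (intro psubset_card_mono) auto
    with less.hyps \<open>Q \<subseteq> W\<close> show ?thesis by blast
  qed
  then have "(\<Sum>Q\<in>S - {P}. l Q) = (\<Sum>Q\<in>S - {P}. r Q)" by (rule sum.cong[OF refl])
  moreover have "(\<Sum>Q\<in>S. l Q) = (\<Sum>Q\<in>S. r Q)" unfolding S_def by (rule sums_eq[OF less.prems])
  ultimately show ?case
    using sum.remove[OF \<open>finite S\<close> \<open>P \<in> S\<close>, of l] sum.remove[OF \<open>finite S\<close> \<open>P \<in> S\<close>, of r] by simp
qed

lemma card_supersets_eq_sum_card_fibres: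
  assumes "finite U" "finite W" "\<forall>x\<in>U. f x \<subseteq> W"
  shows "card {x \<in> U. P \<subseteq> f x} = (\<Sum>Q | P \<subseteq> Q \<and> Q \<subseteq> W. card {x \<in> U. f x = Q})"
proof -
  have "finite {Q. P \<subseteq> Q \<and> Q \<subseteq> W}" using assms(2) by (auto intro: finite_subset[of _ "Pow W"])
  then have "card {x \<in> U. P \<subseteq> f x} =
      (\<Sum>Q | P \<subseteq> Q \<and> Q \<subseteq> W. card {x \<in> {x \<in> U. P \<subseteq> f x}. f x = Q})"
    using assms unfolding card_eq_sum by (subst sum.group) auto
  also have "\<dots> = (\<Sum>Q | P \<subseteq> Q \<and> Q \<subseteq> W. card {x \<in> U. f x = Q})"
    by (intro sum.cong) (auto intro: arg_cong[where f = card])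
  finally show ?thesis .
qed

lemma ex_permutes_fibres_eq:
  assumes "finite U" and card_fibres: "\<And>P. card {x \<in> U. f x = P} = card {x \<in> U. g x = P}"
  shows "\<exists>\<pi>. \<pi> permutes U \<and> (\<forall>x\<in>U. g (\<pi> x) = f x)"
proof -
  have "\<exists>\<beta>. bij_betw \<beta> {x \<in> U. f x = P} {x \<in> U. g x = P}" for P
    using \<open>finite U\<close> card_fibres by (intro finite_same_card_bij) auto
  then obtain \<beta> where \<beta>: "\<And>P. bij_betw (\<beta> P) {x \<in> U. f x = P} {x \<in> U. g x = P}" by metis
  define \<pi> where "\<pi> x = (if x \<in> U then \<beta> (f x) x else x)" for x
  have \<pi>: "\<pi> x \<in> U \<and> g (\<pi> x) = f x" if "x \<in> U" for x
    using that bij_betwE[OF \<beta>[of "f x"]] unfolding \<pi>_def by auto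
  have "inj_on \<pi> U"
  proof (rule inj_onI)
    fix x y assume "x \<in> U" "y \<in> U" "\<pi> x = \<pi> y"
    with \<pi> have "f x = f y" by metis
    with \<open>x \<in> U\<close> \<open>y \<in> U\<close> \<open>\<pi> x = \<pi> y\<close> show "x = y"
      using bij_betw_imp_inj_on[OF \<beta>[of "f x"]] unfolding \<pi>_def inj_on_def by auto
  qed
  moreover have "U \<subseteq> \<pi> ` U"
  proof
    fix y assume "y \<in> U"
    then obtain x where "x \<in> U" "f x = g y" "\<beta> (g y) x = y"
      using bij_betw_imp_surj_on[OF \<beta>[of "g y"]] by force
    then show "y \<in> \<pi> ` U" unfolding \<pi>_def by force
  qed
  ultimately have "bij_betw \<pi> U U" unfolding bij_betw_def using \<pi> by auto
  then have "\<pi> permutes U" by (rule bij_imp_permutes) (simp add: \<pi>_def)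
  with \<pi> show ?thesis by blast
qed

lemma card_fibres_eq_if_card_supersets_eq:
  assumes "finite U" "finite W" "\<forall>x\<in>U. f x \<subseteq> W" "\<forall>x\<in>U. g x \<subseteq> W"
    and supersets: "\<And>P. P \<subseteq> W \<Longrightarrow> card {x \<in> U. P \<subseteq> f x} = card {x \<in> U. P \<subseteq> g x}"
  shows "card {x \<in> U. f x = P} = card {x \<in> U. g x = P}"
proof (cases "P \<subseteq> W")
  case True
  have "(\<Sum>Q | P' \<subseteq> Q \<and> Q \<subseteq> W. card {x \<in> U. f x = Q}) =
      (\<Sum>Q | P' \<subseteq> Q \<and> Q \<subseteq> W. card {x \<in> U. g x = Q})" if "P' \<subseteq> W" for P'
    using supersets[OF that] card_supersets_eq_sum_card_fibres[OF assms(1,2)] assms(3,4) by simp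
  then show ?thesis by (rule eq_if_sums_over_supersets_eq[OF \<open>finite W\<close> _ True])
next
  case False
  then have "{x \<in> U. f x = P} = {}" "{x \<in> U. g x = P} = {}" using assms(3,4) by auto
  then show ?thesis by (metis card.empty)
qed

lemma permutes_image_eq_if_mem_iff:
  assumes "\<pi> permutes U" "A \<subseteq> U" "B \<subseteq> U" "\<And>x. x \<in> U \<Longrightarrow> x \<in> A \<longleftrightarrow> \<pi> x \<in> B"
  shows "\<pi> ` A = B"
proof
  show "\<pi> ` A \<subseteq> B" using assms(2,4) by blast
  show "B \<subseteq> \<pi> ` A"
  proof
    fix y assume "y \<in> B"
    then obtain x where "x \<in> U" "y = \<pi> x" using assms(3) permutes_image[OF assms(1)] by blast
    with assms(4) \<open>y \<in> B\<close> show "y \<in> \<pi> ` A" by blast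
  qed
qed

text \<open>Shifting an index set preserves its run decomposition, so \<open>|H\<^sub>P| = |H\<^sub>P\<^sub>+\<^sub>1|\<close> for
  \<open>P \<subseteq> {1..<m}\<close>. Inverting these sums over supersets shows that the traces of the points on
  \<open>A\<^sub>1, \<dots>, A\<^sub>m\<^sub>-\<^sub>1\<close> and on \<open>A\<^sub>2, \<dots>, A\<^sub>m\<close> have the same distribution, which yields \<open>\<pi>\<close>.\<close>

lemma harmonic_imp_shift_permutation:
  assumes "set_system U m A" "harmonic U m A"
  shows "\<exists>\<pi>. \<pi> permutes U \<and> (\<forall>i\<in>{1..<m}. \<pi> ` A i = A (Suc i))"
proof -
  define W where "W = {1..<m}"
  define f where "f x = {i \<in> W. x \<in> A i}" for x
  define g where "g x = {i \<in> W. x \<in> A (Suc i)}" for x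
  have "finite U" "finite W" using assms(1) unfolding set_system_def W_def by auto
  have fW: "\<forall>x\<in>U. f x \<subseteq> W" and gW: "\<forall>x\<in>U. g x \<subseteq> W" unfolding f_def g_def by auto
  have supersets: "card {x \<in> U. P \<subseteq> f x} = card {x \<in> U. P \<subseteq> g x}" if "P \<subseteq> W" for P
  proof -
    have "{x \<in> U. P \<subseteq> f x} = HI U A P" "{x \<in> U. P \<subseteq> g x} = HI U A ((\<lambda>i. i + 1) ` P)"
      using that unfolding HI_def f_def g_def by auto
    moreover have "run_decomp ((\<lambda>i. i + 1) ` P) = run_decomp P"
      using that by (intro run_decomp_shift) (auto simp: W_def)
    moreover have "P \<subseteq> {1..m}" "(\<lambda>i. i + 1) ` P \<subseteq> {1..m}" using that unfolding W_def by auto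
    ultimately show ?thesis using assms(2) unfolding harmonic_def by metis
  qed
  obtain \<pi> where \<pi>: "\<pi> permutes U" "\<forall>x\<in>U. g (\<pi> x) = f x"
    using ex_permutes_fibres_eq[OF \<open>finite U\<close> card_fibres_eq_if_card_supersets_eq[OF \<open>finite U\<close>
          \<open>finite W\<close> fW gW supersets]] by blast
  have "\<pi> ` A i = A (Suc i)" if "i \<in> {1..<m}" for i
  proof (rule permutes_image_eq_if_mem_iff[OF \<pi>(1)])
    show "A i \<subseteq> U" "A (Suc i) \<subseteq> U" using assms(1) that unfolding set_system_def by auto
    show "x \<in> A i \<longleftrightarrow> \<pi> x \<in> A (Suc i)" if "x \<in> U" for x
      using \<pi>(2) that \<open>i \<in> {1..<m}\<close> unfolding f_def g_def W_def by blast
  qed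
  with \<pi>(1) show ?thesis by blast
qed

lemma shift_funpow:
  assumes "\<forall>i\<in>{1..<m}. \<pi> ` A i = A (Suc i)" "i \<in> {1..m}"
  shows "A i = (\<pi> ^^ (i - 1)) ` A 1"
  using assms(2)
proof (induction i)
  case (Suc i)
  show ?case
  proof (cases "i = 0")
    case False
    then have "A (Suc i) = \<pi> ` A i" using assms(1) Suc.prems by auto
    also have "\<dots> = \<pi> ` (\<pi> ^^ (i - 1)) ` A 1" using Suc.IH Suc.prems False by auto
    also have "\<dots> = (\<pi> ^^ Suc (i - 1)) ` A 1" by (simp add: image_comp)
    also have "Suc (i - 1) = Suc i - 1" using False by simp
    finally show ?thesis .
  qed simp
qed simp

lemma all_eq_if_shift_invariant:
  assumes "\<forall>i\<in>{1..<m}. \<pi> ` A i = A (Suc i)" "\<pi> ` A 1 = A 1"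
  shows "\<forall>i\<in>{1..m}. \<forall>j\<in>{1..m}. A i = A j"
proof -
  have "(\<pi> ^^ k) ` A 1 = A 1" for k
  proof (induction k)
    case (Suc k)
    have "(\<pi> ^^ Suc k) ` A 1 = \<pi> ` (\<pi> ^^ k) ` A 1" by (simp add: image_comp)
    also have "\<dots> = A 1" using Suc.IH assms(2) by simp
    finally show ?case .
  qed simp
  then have "A i = A 1" if "i \<in> {1..m}" for i
    using shift_funpow[OF assms(1) that] by simp
  then show ?thesis by (metis (no_types))
qed

lemma ex_escaping_if_not_invariant:
  assumes "finite X" "inj_on \<pi> X" "\<pi> ` X \<noteq> X"
  obtains y where "y \<in> X" "\<pi> y \<notin> X"
  using assms endo_inj_surj by blast


section \<open>Sums of periodic sequences\<close>

lemma periodic_add_mult: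
  fixes F :: "nat \<Rightarrow> 'b"
  assumes "\<And>d. F (d + p) = F d"
  shows "F (d + p * q) = F d"
proof (induction q)
  case (Suc q)
  have "F (d + p * Suc q) = F ((d + p * q) + p)" by (simp add: algebra_simps)
  with Suc assms show ?case by simp
qed simp

lemma periodic_eq_0_if_eq_0_on_period:
  fixes F :: "nat \<Rightarrow> 'b::zero"
  assumes "0 < p" and periodic: "\<And>d. F (d + p) = F d"
    and vanishes: "\<And>d. a \<le> d \<Longrightarrow> d < a + p \<Longrightarrow> F d = 0"
  shows "F d = 0"
proof -
  have "F e = 0" if "a \<le> e" for e
    using that
  proof (induction e rule: less_induct)
    case (less e)
    show ?case
    proof (cases "e < a + p")
      case False
      then have "F e = F (e - p)" using periodic[of "e - p"] by simp
      with False \<open>0 < p\<close> less.IH[of "e - p"] show ?thesis by simp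
    qed (use less.prems vanishes in blast)
  qed
  moreover have "a \<le> d + p * a" using \<open>0 < p\<close> by (simp add: trans_le_add2)
  ultimately show ?thesis using periodic_add_mult[of F p d a, OF periodic] by simp
qed

lemma sum_lessThan_shift_periodic:
  fixes F :: "nat \<Rightarrow> 'b::ab_group_add"
  assumes "\<And>d. F (d + p) = F d"
  shows "(\<Sum>j<p. F (d + j)) = (\<Sum>j<p. F j)"
proof (induction d)
  case (Suc d)
  have "(\<Sum>j<Suc p. F (d + j)) = F d + (\<Sum>j<p. F (Suc d + j))"
    by (subst sum.lessThan_Suc_shift) simp
  moreover have "(\<Sum>j<Suc p. F (d + j)) = (\<Sum>j<p. F (d + j)) + F d"
    using assms[of d] by (simp add: add.commute)
  ultimately show ?case using Suc by (simp add: add.commute)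
qed simp

lemma periodic_if_window_sums_eq_0:
  fixes F :: "nat \<Rightarrow> 'b::ab_group_add"
  assumes "\<And>d. (\<Sum>j<p. F (d + j)) = 0"
  shows "F (d + p) = F d"
proof -
  have "(\<Sum>j<Suc p. F (d + j)) = F d + (\<Sum>j<p. F (Suc d + j))"
    by (subst sum.lessThan_Suc_shift) simp
  moreover have "(\<Sum>j<Suc p. F (d + j)) = (\<Sum>j<p. F (d + j)) + F (d + p)" by simp
  ultimately show ?thesis using assms[of d] assms[of "Suc d"] by simp
qed

text \<open>Summing over a full period of one summand turns it into a constant, which removes it at
  the cost of shortening the interval by that period minus one.\<close>

lemma sum_periodic_const_if_const_on_interval:
  fixes z :: "'k \<Rightarrow> nat \<Rightarrow> 'b::ab_group_add"
  assumes "finite K"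
    and "\<And>k. k \<in> K \<Longrightarrow> 0 < per k"
    and "\<And>k d. k \<in> K \<Longrightarrow> z k (d + per k) = z k d"
    and "\<And>d. a \<le> d \<Longrightarrow> d < a + L \<Longrightarrow> (\<Sum>k\<in>K. z k d) = c"
    and "1 + (\<Sum>k\<in>K. per k - 1) \<le> L"
  shows "(\<Sum>k\<in>K. z k d) = c"
  using assms
proof (induction K arbitrary: z c L d rule: finite_induct)
  case empty
  then show ?case using empty.prems(3)[of a] empty.prems(4) by simp
next
  case (insert k0 K)
  define p where "p = per k0"
  have "0 < p" and periodic0: "\<And>d. z k0 (d + p) = z k0 d"
    using insert.prems(1,2) unfolding p_def by auto
  define F where "F d = (\<Sum>k\<in>insert k0 K. z k d) - c" for d
  define z' where "z' k d = (\<Sum>j<p. z k (d + j))" for k d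
  define c' where "c' = (\<Sum>j<p. c) - (\<Sum>j<p. z k0 j)"
  have L: "1 + (p - 1) + (\<Sum>k\<in>K. per k - 1) \<le> L"
    using insert.prems(4) insert.hyps(1,2) unfolding p_def by simp
  have z'_F: "(\<Sum>k\<in>K. z' k d) = c' + (\<Sum>j<p. F (d + j))" for d
  proof -
    have "(\<Sum>k\<in>K. z' k d) = (\<Sum>j<p. \<Sum>k\<in>K. z k (d + j))"
      unfolding z'_def by (rule sum.swap)
    also have "\<dots> = (\<Sum>j<p. c + F (d + j) - z k0 (d + j))"
      by (intro sum.cong refl) (simp add: F_def insert.hyps(1,2) algebra_simps)
    also have "\<dots> = c' + (\<Sum>j<p. F (d + j))"
      unfolding c'_def sum_subtractf sum.distrib sum_lessThan_shift_periodic[of "z k0", OF periodic0]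
      by (simp add: algebra_simps)
    finally show ?thesis .
  qed
  have "(\<Sum>k\<in>K. z' k d) = c'" for d
  proof (rule insert.IH[of z' "L - (p - 1)" c'])
    show "z' k (d + per k) = z' k d" if "k \<in> K" for k d
    proof -
      have "z k (d + per k + j) = z k (d + j)" for j
        using insert.prems(2)[of k "d + j"] that by (simp add: ac_simps)
      then show ?thesis unfolding z'_def by simp
    qed
    show "(\<Sum>k\<in>K. z' k d) = c'" if "a \<le> d" "d < a + (L - (p - 1))" for d
    proof -
      have "F (d + j) = 0" if "j < p" for j
        using insert.prems(3)[of "d + j"] that \<open>a \<le> d\<close> \<open>d < a + (L - (p - 1))\<close> L
        unfolding F_def by simp
      then show ?thesis unfolding z'_F by simp
    qed
  qed (use insert.prems(1) L in auto)
  then have "(\<Sum>j<p. F (d + j)) = 0" for d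
    using z'_F[of d] by simp
  then have "F (d + p) = F d" for d by (rule periodic_if_window_sums_eq_0)
  then have "F d = 0"
    by (rule periodic_eq_0_if_eq_0_on_period[OF \<open>0 < p\<close>, of _ a])
      (use insert.prems(3) L in \<open>simp add: F_def\<close>)
  then show ?case unfolding F_def by simp
qed

section \<open>Orbits\<close>

lemma funpow_swap_apply: "(f ^^ n) ((f ^^ j) y) = (f ^^ j) ((f ^^ n) y)"
  by (metis comp_apply funpow_add add.commute)

lemma least_power_funpow:
  assumes "permutation \<pi>"
  shows "least_power \<pi> ((\<pi> ^^ j) y) = least_power \<pi> y"
proof -
  have "inj (\<pi> ^^ j)" using assms by (simp add: permutation_bijective bij_is_inj)
  then have "(\<pi> ^^ n) ((\<pi> ^^ j) y) = (\<pi> ^^ j) y \<longleftrightarrow> (\<pi> ^^ n) y = y" for n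
    unfolding funpow_swap_apply[where f = \<pi>] by (rule inj_eq)
  then show ?thesis unfolding least_power_def by simp
qed

lemma card_orbit_eq_least_power:
  assumes "permutation \<pi>"
  shows "card ((\<lambda>j. (\<pi> ^^ j) y) ` {..<least_power \<pi> y}) = least_power \<pi> y"
proof -
  have "inj_on (\<lambda>j. (\<pi> ^^ j) y) {..<least_power \<pi> y}"
    using cycle_of_permutation[OF assms, of y] by (simp add: distinct_map atLeast_upt)
  then show ?thesis by (simp add: card_image)
qed

lemma orbit_subset:
  assumes "\<pi> permutes U" "y \<in> U"
  shows "(\<lambda>j. (\<pi> ^^ j) y) ` J \<subseteq> U"
  using permutes_in_funpow_image[OF assms] by blast

lemma least_power_le_card:
  assumes "\<pi> permutes U" "finite U" "y \<in> U"
  shows "least_power \<pi> y \<le> card U"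
proof -
  have "permutation \<pi>" using assms(1,2) permutation_permutes by blast
  then have "least_power \<pi> y = card ((\<lambda>j. (\<pi> ^^ j) y) ` {..<least_power \<pi> y})"
    by (simp add: card_orbit_eq_least_power)
  also have "\<dots> \<le> card U" by (rule card_mono[OF assms(2) orbit_subset[OF assms(1,3)]])
  finally show ?thesis .
qed

lemma orbit_eq_if_card_le_least_power:
  assumes "\<pi> permutes U" "finite U" "u \<in> U" "card U \<le> least_power \<pi> u"
  shows "(\<lambda>j. (\<pi> ^^ j) u) ` {..<least_power \<pi> u} = U"
proof -
  have "permutation \<pi>" using assms(1,2) permutation_permutes by blast
  then have "card ((\<lambda>j. (\<pi> ^^ j) u) ` {..<least_power \<pi> u}) = least_power \<pi> u"
    by (rule card_orbit_eq_least_power)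
  with assms(4) show ?thesis using card_seteq[OF assms(2) orbit_subset[OF assms(1,3)]] by simp
qed

lemma sum_least_powers_le_card:
  assumes "\<pi> permutes U" "finite U"
  shows "(\<Sum>p \<in> least_power \<pi> ` U. p) \<le> card U"
proof -
  have "permutation \<pi>" using assms permutation_permutes by blast
  define orbit where "orbit y = (\<lambda>j. (\<pi> ^^ j) y) ` {..<least_power \<pi> y}" for y
  define r where "r = inv_into U (least_power \<pi>)"
  have r: "r p \<in> U \<and> least_power \<pi> (r p) = p" if "p \<in> least_power \<pi> ` U" for p
    using that unfolding r_def by (simp add: inv_into_into f_inv_into_f)
  have disjoint: "orbit (r p) \<inter> orbit (r q) = {}"
    if "p \<in> least_power \<pi> ` U" "q \<in> least_power \<pi> ` U" "p \<noteq> q" for p q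
  proof (rule ccontr)
    assume "orbit (r p) \<inter> orbit (r q) \<noteq> {}"
    then obtain j k where "(\<pi> ^^ j) (r p) = (\<pi> ^^ k) (r q)" unfolding orbit_def by blast
    then have "least_power \<pi> (r p) = least_power \<pi> (r q)"
      using least_power_funpow[OF \<open>permutation \<pi>\<close>, of j "r p"]
        least_power_funpow[OF \<open>permutation \<pi>\<close>, of k "r q"] by simp
    with r that show False by simp
  qed
  have "card (\<Union>p \<in> least_power \<pi> ` U. orbit (r p)) =
      (\<Sum>p \<in> least_power \<pi> ` U. card (orbit (r p)))"
  proof (rule card_UN_disjoint)
    show "finite (least_power \<pi> ` U)" using assms(2) by simp
    show "\<forall>p \<in> least_power \<pi> ` U. finite (orbit (r p))" unfolding orbit_def by simp
  qed (use disjoint in blast)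
  also have "\<dots> = (\<Sum>p \<in> least_power \<pi> ` U. p)"
  proof (rule sum.cong[OF refl])
    fix p assume "p \<in> least_power \<pi> ` U"
    then show "card (orbit (r p)) = p"
      using r card_orbit_eq_least_power[OF \<open>permutation \<pi>\<close>, of "r p"] unfolding orbit_def by simp
  qed
  finally have "(\<Sum>p \<in> least_power \<pi> ` U. p) = card (\<Union>p \<in> least_power \<pi> ` U. orbit (r p))" ..
  also have "\<dots> \<le> card U"
  proof (rule card_mono[OF assms(2)])
    show "(\<Union>p \<in> least_power \<pi> ` U. orbit (r p)) \<subseteq> U"
      using r orbit_subset[OF assms(1)] unfolding orbit_def by (simp add: UN_subset_iff)
  qed
  finally show ?thesis .
qed

section \<open>Escape counts\<close>

locale permuted_subset =
  fixes U :: "'a set" and \<pi> :: "'a \<Rightarrow> 'a" and X :: "'a set"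
  assumes finite_U: "finite U" and permutes: "\<pi> permutes U" and subset: "X \<subseteq> U"
begin

lemma permutation: "permutation \<pi>"
  using finite_U permutes permutation_permutes by blast

lemma least_power_pos: "0 < least_power \<pi> y"
  using least_power_of_permutation(2)[OF permutation] .

lemma finite_X: "finite X"
  using finite_U subset by (rule finite_subset[rotated])

lemma inj_on_funpow: "inj_on (\<pi> ^^ d) A"
  using permutation by (simp add: permutation_bijective bij_is_inj inj_on_subset[of _ UNIV])

definition escape :: "nat \<Rightarrow> nat" where
  "escape d = card {y \<in> X. (\<pi> ^^ d) y \<notin> X}"

definition escape_period :: "nat \<Rightarrow> nat \<Rightarrow> nat" where
  "escape_period p d = card {y \<in> X. least_power \<pi> y = p \<and> (\<pi> ^^ d) y \<notin> X}"

lemma escape_0: "escape 0 = 0"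
  by (simp add: escape_def)

lemma escape_eq_0_iff: "escape d = 0 \<longleftrightarrow> (\<forall>y\<in>X. (\<pi> ^^ d) y \<in> X)"
  unfolding escape_def using finite_X by auto

lemma escape_period_0: "escape_period p 0 = 0"
proof -
  have "{y \<in> X. least_power \<pi> y = p \<and> (\<pi> ^^ 0) y \<notin> X} = {}" by auto
  then show ?thesis unfolding escape_period_def by (metis card.empty)
qed

lemma escape_eq_card_diff: "escape d = card X - card (X \<inter> (\<pi> ^^ d) ` X)"
proof -
  have "card (X \<inter> (\<pi> ^^ d) ` X) = card ((\<pi> ^^ d) ` {y \<in> X. (\<pi> ^^ d) y \<in> X})"
    by (rule arg_cong[where f = card]) auto
  also have "\<dots> = card {y \<in> X. (\<pi> ^^ d) y \<in> X}"
    using inj_on_funpow by (rule card_image)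
  finally have "card (X \<inter> (\<pi> ^^ d) ` X) = card {y \<in> X. (\<pi> ^^ d) y \<in> X}" .
  moreover have "card X = card {y \<in> X. (\<pi> ^^ d) y \<in> X} + escape d"
    unfolding escape_def using finite_X by (subst card_Un_disjoint[symmetric]) (auto intro: arg_cong[where f = card])
  ultimately show ?thesis by simp
qed

lemma funpow_image_eq_if_escape_eq_0:
  assumes "escape d = 0"
  shows "(\<pi> ^^ d) ` X = X"
proof -
  have "(\<pi> ^^ d) ` X \<subseteq> X" using assms unfolding escape_eq_0_iff by auto
  with inj_on_funpow finite_X show ?thesis by (simp add: endo_inj_surj)
qed

lemma invariant_if_escape_2_3_eq_0:
  assumes "escape 2 = 0" "escape 3 = 0"
  shows "\<pi> ` X = X"
proof -
  have "\<pi> ` X = \<pi> ` (\<pi> ^^ 2) ` X" using funpow_image_eq_if_escape_eq_0[OF assms(1)] by simp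
  also have "\<dots> = (\<pi> ^^ 3) ` X" by (simp add: image_comp numeral_3_eq_3 numeral_2_eq_2)
  also have "\<dots> = X" using funpow_image_eq_if_escape_eq_0[OF assms(2)] .
  finally show ?thesis .
qed

lemma escape_eq_sum_escape_period: "escape d = (\<Sum>p \<in> least_power \<pi> ` U. escape_period p d)"
proof -
  have "{y \<in> X. (\<pi> ^^ d) y \<notin> X} =
      (\<Union>p \<in> least_power \<pi> ` U. {y \<in> X. least_power \<pi> y = p \<and> (\<pi> ^^ d) y \<notin> X})"
    using subset by auto
  moreover have "card (\<Union>p \<in> least_power \<pi> ` U. {y \<in> X. least_power \<pi> y = p \<and> (\<pi> ^^ d) y \<notin> X})
      = (\<Sum>p \<in> least_power \<pi> ` U. card {y \<in> X. least_power \<pi> y = p \<and> (\<pi> ^^ d) y \<notin> X})"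
    by (rule card_UN_disjoint) (use finite_U finite_X in auto)
  ultimately show ?thesis unfolding escape_def escape_period_def by simp
qed

lemma escape_period_periodic: "escape_period p (d + p) = escape_period p d"
proof -
  have "(\<pi> ^^ (d + p)) y = (\<pi> ^^ d) y" if "least_power \<pi> y = p" for y
    using least_power_of_permutation(1)[OF permutation, of y] that by (simp add: funpow_add)
  then show ?thesis unfolding escape_period_def by (metis (no_types))
qed

lemma escape_period_mult_eq_0: "escape_period p (p * q) = 0"
  using periodic_add_mult[of "escape_period p" p 0 q] escape_period_periodic escape_period_0 by simp

lemma escape_period_periodic_if_eq_0:
  assumes "escape_period p r = 0"
  shows "escape_period p (d + r) = escape_period p d"
proof -
  define Y where "Y = {y \<in> X. least_power \<pi> y = p}"
  have "finite Y" unfolding Y_def using finite_X by simp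
  have "(\<pi> ^^ r) y \<in> X" if "y \<in> Y" for y
    using assms that finite_X unfolding escape_period_def Y_def by auto
  then have "(\<pi> ^^ r) ` Y \<subseteq> Y"
    unfolding Y_def using least_power_funpow[OF permutation] by auto
  then have Y: "(\<pi> ^^ r) ` Y = Y"
    using \<open>finite Y\<close> inj_on_funpow by (simp add: endo_inj_surj)
  have "{y \<in> Y. (\<pi> ^^ d) y \<notin> X} = (\<pi> ^^ r) ` {y \<in> Y. (\<pi> ^^ (d + r)) y \<notin> X}"
  proof
    show "(\<pi> ^^ r) ` {y \<in> Y. (\<pi> ^^ (d + r)) y \<notin> X} \<subseteq> {y \<in> Y. (\<pi> ^^ d) y \<notin> X}"
      using Y by (auto simp: funpow_add)
    show "{y \<in> Y. (\<pi> ^^ d) y \<notin> X} \<subseteq> (\<pi> ^^ r) ` {y \<in> Y. (\<pi> ^^ (d + r)) y \<notin> X}"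
    proof
      fix x assume x: "x \<in> {y \<in> Y. (\<pi> ^^ d) y \<notin> X}"
      then obtain y where "y \<in> Y" "x = (\<pi> ^^ r) y" using Y by blast
      with x show "x \<in> (\<pi> ^^ r) ` {y \<in> Y. (\<pi> ^^ (d + r)) y \<notin> X}" by (auto simp: funpow_add)
    qed
  qed
  then have "card {y \<in> Y. (\<pi> ^^ d) y \<notin> X} = card {y \<in> Y. (\<pi> ^^ (d + r)) y \<notin> X}"
    by (simp add: card_image[OF inj_on_funpow])
  then show ?thesis unfolding escape_period_def Y_def by (simp add: conj_assoc)
qed


lemma escape_const_if_harmonic:
  assumes "harmonic U m A" "\<forall>i\<in>{1..m}. A i \<subseteq> U" "\<forall>i\<in>{1..<m}. \<pi> ` A i = A (Suc i)" "A 1 = X"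
    and "2 \<le> d" "d < m"
  shows "escape d = escape 2"
proof -
  have "escape k = card X - card (HI U A {1, 3})" if "2 \<le> k" "k < m" for k
  proof -
    have "HI U A {1, Suc k} = X \<inter> (\<pi> ^^ k) ` X"
      using shift_funpow[OF assms(3), of "Suc k"] assms(2,4) that unfolding HI_def by auto
    moreover have "card (HI U A {1, Suc k}) = card (HI U A {1, 3})"
      using that by (intro assms(1)[unfolded harmonic_def, rule_format]) (auto simp: run_decomp_two_points)
    ultimately show ?thesis using escape_eq_card_diff by simp
  qed
  with assms(5,6) show ?thesis by simp
qed

end

lemma finite_card_le_2_cases:
  fixes P :: "'b::linorder set"
  assumes "finite P" "card P \<le> 2"
  obtains (empty) "P = {}" | (singleton) p where "P = {p}" | (doubleton) p q where "P = {p, q}" "p < q"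
proof -
  consider "card P = 0" | "card P = 1" | "card P = 2" using assms(2) by linarith
  then show thesis
  proof cases
    case 3
    then obtain x y where "P = {x, y}" "x \<noteq> y" by (auto simp: card_2_iff)
    then show thesis using doubleton[of x y] doubleton[of y x] by (cases "x < y") (auto simp: insert_commute)
  qed (use empty singleton assms(1) card_1_singletonE in auto)
qed

locale constant_escape = permuted_subset +
  fixes m :: nat
  assumes four_le_m: "4 \<le> m" and card_U_le: "card U \<le> m"
    and escape_const: "\<And>d. 2 \<le> d \<Longrightarrow> d < m \<Longrightarrow> escape d = escape 2"
begin

lemma invariant_if_escape_2_eq_0: "escape 2 = 0 \<Longrightarrow> \<pi> ` X = X"
  using escape_const[of 3] four_le_m invariant_if_escape_2_3_eq_0 by simp

lemma escape_2_eq_0_if_periodic_decomposition: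
  fixes g :: "'k \<Rightarrow> nat \<Rightarrow> nat"
  assumes "finite K" and decomp: "\<And>d. escape d = (\<Sum>k\<in>K. g k d)"
    and "\<And>k. k \<in> K \<Longrightarrow> 0 < per k" and "\<And>k d. k \<in> K \<Longrightarrow> g k (d + per k) = g k d"
    and "1 + (\<Sum>k\<in>K. per k - 1) \<le> m - 2"
  shows "escape 2 = 0"
proof -
  have "(\<Sum>k\<in>K. int (g k d)) = int (escape 2)" for d
  proof (rule sum_periodic_const_if_const_on_interval[where a = 2 and L = "m - 2"])
    show "(\<Sum>k\<in>K. int (g k d)) = int (escape 2)" if "2 \<le> d" "d < 2 + (m - 2)" for d
    proof -
      have "escape 2 = (\<Sum>k\<in>K. g k d)" using escape_const[of d] that decomp[of d] four_le_m by simp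
      then show ?thesis by simp
    qed
  qed (use assms in auto)
  then have "int (escape d) = int (escape 2)" for d using decomp by simp
  from this[of 0] show ?thesis using escape_0 by simp
qed

lemma invariant_if_short_periods:
  assumes "1 + (\<Sum>p \<in> least_power \<pi> ` U. p - 1) \<le> m - 2"
  shows "\<pi> ` X = X"
proof (rule invariant_if_escape_2_eq_0)
  show "escape 2 = 0"
  proof (rule escape_2_eq_0_if_periodic_decomposition[where per = id and g = escape_period])
    show "0 < id p" if "p \<in> least_power \<pi> ` U" for p
      using that least_power_of_permutation(2)[OF permutation] by auto
  qed (use finite_U assms escape_eq_sum_escape_period escape_period_periodic in auto)
qed

lemma single_period_cases:
  assumes "least_power \<pi> ` U = {p}" and "m - 2 \<le> p - 1"
  shows "\<pi> ` X = X \<or> (\<exists>u\<in>U. least_power \<pi> u = m)"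
proof -
  have "p \<le> m" using sum_least_powers_le_card[OF permutes finite_U] assms(1) card_U_le by simp
  with assms(2) four_le_m consider "p = m" | "p = m - 1" by linarith
  then show ?thesis
  proof cases
    case 1
    then show ?thesis using assms(1) by blast
  next
    case 2
    have "(\<pi> ^^ (m - 1)) y = y" if "y \<in> X" for y
    proof -
      have "least_power \<pi> y \<in> {p}" using assms(1) that subset by blast
      then show ?thesis using 2 least_power_of_permutation(1)[OF permutation, of y] by simp
    qed
    then have "escape (m - 1) = 0" unfolding escape_eq_0_iff by simp
    with escape_const[of "m - 1"] four_le_m have "escape 2 = 0" by simp
    then show ?thesis using invariant_if_escape_2_eq_0 by blast
  qed
qed

lemma escape_period_pos_if_two_periods:
  assumes periods: "least_power \<pi> ` U = {p, q}" and "p \<noteq> q" "p + q = m" "escape 2 \<noteq> 0"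
    and "0 < r" "r < p"
  shows "0 < escape_period p r"
proof (rule ccontr)
  assume "\<not> 0 < escape_period p r"
  then have periodic_r: "escape_period p (d + r) = escape_period p d" for d
    using escape_period_periodic_if_eq_0 by simp
  have "0 < q" using periods least_power_pos by (metis imageE insertI2 singletonI)
  have "escape 2 = 0"
  proof (rule escape_2_eq_0_if_periodic_decomposition[where K = "{p, q}" and g = escape_period
        and per = "\<lambda>k. if k = p then r else q"])
    show "escape d = (\<Sum>k\<in>{p, q}. escape_period k d)" for d
      using escape_eq_sum_escape_period[of d] periods by simp
    show "0 < (if k = p then r else q)" for k using \<open>0 < q\<close> \<open>0 < r\<close> by simp
    show "escape_period k (d + (if k = p then r else q)) = escape_period k d" if "k \<in> {p, q}" for k d
      using that periodic_r escape_period_periodic by auto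
    show "1 + (\<Sum>k\<in>{p, q}. (if k = p then r else q) - 1) \<le> m - 2"
      using assms(2,3,5,6) \<open>0 < q\<close> by simp
  qed simp
  with assms(4) show False ..
qed

lemma escape_eq_two_periods:
  assumes "least_power \<pi> ` U = {p, q}" "p \<noteq> q"
  shows "escape d = escape_period p d + escape_period q d"
  using escape_eq_sum_escape_period[of d] assms by simp

lemma two_periods_consecutive:
  assumes periods: "least_power \<pi> ` U = {p, q}" and "p < q" "p + q = m" "escape 2 \<noteq> 0"
  shows "2 \<le> p" "q = Suc p"
proof -
  have escape_eq: "escape d = escape_period p d + escape_period q d" for d
    using escape_eq_two_periods[OF periods] \<open>p < q\<close> by simp
  have "0 < p" using periods least_power_pos by (metis imageE insertI1)
  show "2 \<le> p"
  proof (rule ccontr)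
    assume "\<not> 2 \<le> p"
    with \<open>0 < p\<close> have "p = 1" by simp
    then have "escape q = 0"
      using escape_eq[of q] escape_period_mult_eq_0[of p q] escape_period_mult_eq_0[of q 1] by simp
    moreover have "escape q = escape 2" using escape_const[of q] \<open>p = 1\<close> assms(2,3) by simp
    ultimately show False using assms(4) by simp
  qed
  show "q = Suc p"
  proof (rule ccontr)
    assume "q \<noteq> Suc p"
    have "escape (q - p) = escape_period p q + escape_period q (q - p)"
      using escape_eq[of "q - p"] escape_period_periodic[of p "q - p"] \<open>p < q\<close> by simp
    moreover have "0 < escape_period q (q - p)"
      using escape_period_pos_if_two_periods[of q p] periods assms(2-4) \<open>2 \<le> p\<close>
      by (simp add: insert_commute)
    moreover have "escape q = escape_period p q"
      using escape_eq[of q] escape_period_mult_eq_0[of q 1] by simp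
    moreover have "escape (q - p) = escape q"
      using escape_const[of "q - p"] escape_const[of q] \<open>q \<noteq> Suc p\<close> assms(2,3) \<open>2 \<le> p\<close> by simp
    ultimately show False by simp
  qed
qed

lemma two_periods_imp_2_3:
  assumes periods: "least_power \<pi> ` U = {p, q}" and "p < q" "p + q = m" "escape 2 \<noteq> 0"
  shows "p = 2 \<and> q = 3"
proof -
  have "2 \<le> p" "q = Suc p" using two_periods_consecutive[OF assms] by simp_all
  have escape_eq: "escape d = escape_period p d + escape_period q d" for d
    using escape_eq_two_periods[OF periods] \<open>p < q\<close> by simp
  have "p = 2"
  proof (rule ccontr)
    assume "p \<noteq> 2"
    with \<open>2 \<le> p\<close> have "3 \<le> p" by simp
    have "escape_period p (2 * p) = 0" using escape_period_mult_eq_0[of p 2] by (simp add: mult.commute)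
    moreover have "escape_period q (2 * p) = escape_period q (p - 1)"
      using escape_period_periodic[of q "p - 1"] \<open>q = Suc p\<close> \<open>3 \<le> p\<close> by (simp add: mult_2)
    ultimately have "escape (2 * p) = escape_period q (p - 1)" using escape_eq[of "2 * p"] by simp
    moreover have "escape (p - 1) = escape_period p (p - 1) + escape_period q (p - 1)"
      by (rule escape_eq)
    moreover have "0 < escape_period p (p - 1)"
      using escape_period_pos_if_two_periods[OF periods] assms(2-4) \<open>3 \<le> p\<close> by simp
    moreover have "escape (2 * p) = escape (p - 1)"
      using escape_const[of "2 * p"] escape_const[of "p - 1"] \<open>3 \<le> p\<close> \<open>q = Suc p\<close> assms(3) by simp
    ultimately show False by simp
  qed
  with \<open>q = Suc p\<close> show ?thesis by simp
qed

lemma two_periods_cases: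
  assumes periods: "least_power \<pi> ` U = {p, q}" and "p < q" "m - 2 \<le> (p - 1) + (q - 1)"
  shows "\<pi> ` X = X \<or>
    (m = 5 \<and> (\<exists>u\<in>X. \<exists>v\<in>X. \<pi> u \<notin> X \<and> \<pi> v \<notin> X \<and> least_power \<pi> u = 2 \<and> least_power \<pi> v = 3))"
proof (cases "escape 2 = 0")
  case False
  have "0 < p" using periods least_power_pos by (metis imageE insertI1)
  moreover have "p + q \<le> m"
    using sum_least_powers_le_card[OF permutes finite_U] card_U_le periods \<open>p < q\<close> by simp
  ultimately have "p + q = m" using assms(2,3) four_le_m by linarith
  then have "p = 2" "q = 3" using two_periods_imp_2_3[OF periods \<open>p < q\<close>] False by auto
  then have "0 < escape_period 2 1" "0 < escape_period 3 1"
    using escape_period_pos_if_two_periods[of p q 1] escape_period_pos_if_two_periods[of q p 1]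
      periods False \<open>p + q = m\<close> by (simp_all add: insert_commute)
  then obtain u v where "u \<in> X" "least_power \<pi> u = 2" "\<pi> u \<notin> X"
    "v \<in> X" "least_power \<pi> v = 3" "\<pi> v \<notin> X"
    unfolding escape_period_def by (auto simp: card_gt_0_iff)
  then show ?thesis using \<open>p + q = m\<close> \<open>p = 2\<close> \<open>q = 3\<close> by auto
qed (use invariant_if_escape_2_eq_0 in blast)

lemma invariant_or_full_cycle_or_periods_2_3:
  "\<pi> ` X = X \<or> (\<exists>u\<in>U. least_power \<pi> u = m) \<or>
    (m = 5 \<and> (\<exists>u\<in>X. \<exists>v\<in>X. \<pi> u \<notin> X \<and> \<pi> v \<notin> X \<and> least_power \<pi> u = 2 \<and> least_power \<pi> v = 3))"
proof -
  define P where "P = least_power \<pi> ` U"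
  have "finite P" unfolding P_def using finite_U by simp
  consider (short) "1 + (\<Sum>p\<in>P. p - 1) \<le> m - 2" | (long) "m - 2 \<le> (\<Sum>p\<in>P. p - 1)" by linarith
  then show ?thesis
  proof cases
    case short
    then show ?thesis using invariant_if_short_periods unfolding P_def by blast
  next
    case long
    have "(\<Sum>p\<in>P. p - 1) + card P = (\<Sum>p\<in>P. p - 1 + 1)" by (subst sum.distrib) simp
    also have "\<dots> = (\<Sum>p\<in>P. p)" using least_power_pos unfolding P_def by (intro sum.cong) auto
    also have "\<dots> \<le> m"
      using sum_least_powers_le_card[OF permutes finite_U] card_U_le unfolding P_def by simp
    finally have "card P \<le> 2" using long four_le_m by linarith
    with \<open>finite P\<close> show ?thesis
    proof (cases rule: finite_card_le_2_cases)
      case empty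
      then show ?thesis using subset unfolding P_def by auto
    next
      case (singleton p)
      then show ?thesis using single_period_cases long unfolding P_def by auto
    next
      case (doubleton p q)
      then have "m - 2 \<le> (p - 1) + (q - 1)" using long by simp
      then show ?thesis using two_periods_cases[of p q] doubleton unfolding P_def by blast
    qed
  qed
qed

end

lemma small_shift_cases:
  assumes "\<pi> permutes U" "finite U" "card U \<le> m" "m \<le> 3" "A 1 \<subseteq> U"
  shows "\<pi> ` A 1 = A 1 \<or> (\<exists>u\<in>U. least_power \<pi> u = m) \<or>
    (m = 3 \<and> (\<exists>y\<in>A 1. \<pi> y \<notin> A 1 \<and> \<pi> (\<pi> y) = y))"
proof (cases "\<pi> ` A 1 = A 1")
  case False
  have "finite (A 1)" "inj_on \<pi> (A 1)"
    using assms(2,5) permutes_inj_on[OF assms(1)] by (auto intro: finite_subset inj_on_subset)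
  then obtain y where "y \<in> A 1" "\<pi> y \<notin> A 1" using False by (rule ex_escaping_if_not_invariant)
  then have "y \<in> U" "\<pi> y \<noteq> y" using assms(5) by auto
  have "permutation \<pi>" using assms(1,2) permutation_permutes by blast
  have "least_power \<pi> y \<noteq> 1"
    using least_power_of_permutation(1)[OF \<open>permutation \<pi>\<close>, of y] \<open>\<pi> y \<noteq> y\<close> by auto
  moreover have "least_power \<pi> y \<le> m"
    using least_power_le_card[OF assms(1,2) \<open>y \<in> U\<close>] assms(3) by simp
  moreover have "0 < least_power \<pi> y" using least_power_of_permutation(2)[OF \<open>permutation \<pi>\<close>] .
  ultimately consider "least_power \<pi> y = m" | "least_power \<pi> y = 2" "m = 3"
    using assms(4) by linarith
  then show ?thesis
  proof cases
    case 2
    then have "(\<pi> ^^ 2) y = y" using least_power_of_permutation(1)[OF \<open>permutation \<pi>\<close>, of y] by simp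
    then have "\<pi> (\<pi> y) = y" by (simp add: numeral_2_eq_2)
    with 2 \<open>y \<in> A 1\<close> \<open>\<pi> y \<notin> A 1\<close> show ?thesis by blast
  qed (use \<open>y \<in> U\<close> in blast)
qed simp

lemma shift_permutation_cases:
  assumes "set_system U m A" "harmonic U m A" "card U \<le> m"
    and "\<pi> permutes U" "\<forall>i\<in>{1..<m}. \<pi> ` A i = A (Suc i)"
  shows "\<pi> ` A 1 = A 1 \<or> (\<exists>u\<in>U. least_power \<pi> u = m)
    \<or> (m = 3 \<and> (\<exists>y\<in>A 1. \<pi> y \<notin> A 1 \<and> \<pi> (\<pi> y) = y))
    \<or> (m = 5 \<and> (\<exists>u\<in>A 1. \<exists>v\<in>A 1. \<pi> u \<notin> A 1 \<and> \<pi> v \<notin> A 1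
        \<and> least_power \<pi> u = 2 \<and> least_power \<pi> v = 3))"
proof -
  have "finite U" "\<forall>i\<in>{1..m}. A i \<subseteq> U" using assms(1) unfolding set_system_def by auto
  show ?thesis
  proof (cases "4 \<le> m")
    case True
    then have "A 1 \<subseteq> U" using \<open>\<forall>i\<in>{1..m}. A i \<subseteq> U\<close> by simp
    then interpret permuted_subset U \<pi> "A 1"
      using \<open>finite U\<close> assms(4) by unfold_locales
    interpret constant_escape U \<pi> "A 1" m
    proof unfold_locales
      show "escape d = escape 2" if "2 \<le> d" "d < m" for d
        using escape_const_if_harmonic[OF assms(2) \<open>\<forall>i\<in>{1..m}. A i \<subseteq> U\<close> assms(5) refl that] .
    qed (use True assms(3) in auto)
    show ?thesis using invariant_or_full_cycle_or_periods_2_3 by auto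
  next
    case False
    show ?thesis
    proof (cases "m = 0")
      case True
      then have "U = {}" using assms(3) \<open>finite U\<close> by simp
      then have "\<pi> = id" using assms(4) by (simp add: permutes_empty)
      then show ?thesis by simp
    next
      case m: False
      then have "m \<le> 3" "A 1 \<subseteq> U" using \<open>\<forall>i\<in>{1..m}. A i \<subseteq> U\<close> False by auto
      with small_shift_cases[OF assms(4) \<open>finite U\<close> assms(3)] show ?thesis by blast
    qed
  qed
qed

section \<open>Isomorphisms\<close>

lemma iso_sys_if_inverse:
  assumes "bij_betw \<tau> V U" "\<forall>i\<in>{1..m}. B i \<subseteq> V \<and> \<tau> ` B i = A i"
  shows "iso_sys U A V B m"
proof -
  have "bij_betw (inv_into V \<tau>) U V" using assms(1) by (rule bij_betw_inv_into)
  moreover have "inv_into V \<tau> ` A i = B i" if "i \<in> {1..m}" for i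
  proof -
    have "A i = \<tau> ` B i" "B i \<subseteq> V" using assms(2) that by auto
    then show ?thesis using inv_into_image_cancel[OF bij_betw_imp_inj_on[OF assms(1)]] by simp
  qed
  ultimately show ?thesis unfolding iso_sys_def by blast
qed

lemma iso_sys_singletons:
  assumes "finite U" "card U \<le> m" "\<forall>i\<in>{1..m}. A i \<subseteq> U \<and> A i \<noteq> {}"
    and unique: "\<forall>y\<in>U. \<exists>!i. i \<in> {1..m} \<and> y \<in> A i"
  shows "iso_sys U A {1..m} (\<lambda>i. {i}) m"
proof -
  define \<sigma> where "\<sigma> y = (THE i. i \<in> {1..m} \<and> y \<in> A i)" for y
  have \<sigma>: "\<sigma> y = i" if "i \<in> {1..m}" "y \<in> A i" for i y
  proof -
    have "y \<in> U" using that assms(3) by blast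
    then have "\<exists>!i. i \<in> {1..m} \<and> y \<in> A i" using unique by blast
    then show ?thesis unfolding \<sigma>_def by (rule the1_equality) (use that in simp)
  qed
  have image: "\<sigma> ` A i = {i}" if "i \<in> {1..m}" for i
  proof
    show "\<sigma> ` A i \<subseteq> {i}" using \<sigma>[OF that] by blast
    have "A i \<noteq> {}" using assms(3) that by simp
    then obtain y where "y \<in> A i" by blast
    then show "{i} \<subseteq> \<sigma> ` A i" using \<sigma>[OF that] by (simp add: rev_image_eqI)
  qed
  have "\<sigma> ` U = {1..m}"
  proof
    show "\<sigma> ` U \<subseteq> {1..m}"
    proof
      fix i assume "i \<in> \<sigma> ` U"
      then obtain y j where "y \<in> U" "i = \<sigma> y" "j \<in> {1..m}" "y \<in> A j" using unique by blast
      then show "i \<in> {1..m}" using \<sigma> by simp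
    qed
    show "{1..m} \<subseteq> \<sigma> ` U"
    proof
      fix i assume "i \<in> {1..m}"
      then have "i \<in> \<sigma> ` A i" "A i \<subseteq> U" using image assms(3) by auto
      then show "i \<in> \<sigma> ` U" by blast
    qed
  qed
  moreover have "card (\<sigma> ` U) = card U" using \<open>\<sigma> ` U = {1..m}\<close> assms(2) card_image_le[OF assms(1), of \<sigma>] by simp
  then have "inj_on \<sigma> U" by (rule eq_card_imp_inj_on[OF assms(1)])
  ultimately show ?thesis unfolding iso_sys_def bij_betw_def using image by (intro exI[of _ \<sigma>]) simp
qed

lemma iso_sys_compl:
  assumes "iso_sys U (compl_sys U A) V B m" "\<forall>i\<in>{1..m}. A i \<subseteq> U"
  shows "iso_sys U A V (compl_sys V B) m"
proof -
  obtain \<sigma> where \<sigma>: "bij_betw \<sigma> U V" "\<forall>i\<in>{1..m}. \<sigma> ` (U - A i) = B i"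
    using assms(1) unfolding iso_sys_def compl_sys_def by blast
  have "\<sigma> ` A i = V - B i" if "i \<in> {1..m}" for i
  proof -
    have "\<sigma> ` A i = \<sigma> ` (U - (U - A i))" using assms(2) that by (simp add: double_diff)
    also have "\<dots> = \<sigma> ` U - \<sigma> ` (U - A i)"
      using bij_betw_imp_inj_on[OF \<sigma>(1)] by (simp add: inj_on_image_set_diff)
    finally show ?thesis using bij_betw_imp_surj_on[OF \<sigma>(1)] \<sigma>(2) that by simp
  qed
  with \<sigma>(1) show ?thesis unfolding iso_sys_def compl_sys_def by (intro exI[of _ \<sigma>]) simp
qed

lemma ex1_if_card_Collect_eq_1:
  assumes "card {x. P x} = 1"
  shows "\<exists>!x. P x"
proof -
  obtain j where "{x. P x} = {j}" using assms by (rule card_1_singletonE)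
  then have "P x \<longleftrightarrow> x = j" for x by blast
  then show ?thesis by simp
qed

section \<open>A single cycle\<close>

definition cyc_succ :: "nat \<Rightarrow> nat \<Rightarrow> nat" where
  "cyc_succ m i = (if i = m then 1 else Suc i)"

definition cyclic_adjacencies :: "nat \<Rightarrow> nat set \<Rightarrow> nat" where
  "cyclic_adjacencies m I = card {i \<in> I. cyc_succ m i \<in> I}"

lemma bij_betw_cyc_succ:
  assumes "1 \<le> m"
  shows "bij_betw (cyc_succ m) {1..m} {1..m}"
proof -
  have "inj_on (cyc_succ m) {1..m}" unfolding inj_on_def cyc_succ_def by auto
  moreover have "cyc_succ m ` {1..m} = {1..m}"
  proof
    show "cyc_succ m ` {1..m} \<subseteq> {1..m}" using assms unfolding cyc_succ_def by auto
    show "{1..m} \<subseteq> cyc_succ m ` {1..m}"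
    proof
      fix j assume j: "j \<in> {1..m}"
      show "j \<in> cyc_succ m ` {1..m}"
      proof (cases "j = 1")
        case True
        then have "j = cyc_succ m m" unfolding cyc_succ_def by simp
        with assms show ?thesis by auto
      next
        case False
        with j have "j = cyc_succ m (j - 1)" "j - 1 \<in> {1..m}" unfolding cyc_succ_def by auto
        then show ?thesis by blast
      qed
    qed
  qed
  ultimately show ?thesis unfolding bij_betw_def by simp
qed

lemma cyclic_adjacencies_image_cyc_succ:
  assumes "1 \<le> m" "I \<subseteq> {1..m}"
  shows "cyclic_adjacencies m (cyc_succ m ` I) = cyclic_adjacencies m I"
proof -
  have inj: "inj_on (cyc_succ m) {1..m}"
    using bij_betw_cyc_succ[OF assms(1)] by (rule bij_betw_imp_inj_on)
  have "{i \<in> cyc_succ m ` I. cyc_succ m i \<in> cyc_succ m ` I} = cyc_succ m ` {i \<in> I. cyc_succ m i \<in> I}"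
  proof -
    have range: "cyc_succ m i \<in> {1..m}" if "i \<in> {1..m}" for i
      using bij_betwE[OF bij_betw_cyc_succ[OF assms(1)]] that by blast
    have "cyc_succ m (cyc_succ m i) \<in> cyc_succ m ` I \<longleftrightarrow> cyc_succ m i \<in> I" if "i \<in> I" for i
      using inj_on_image_mem_iff[OF inj range assms(2)] that assms(2) by blast
    then show ?thesis by auto
  qed
  moreover have "inj_on (cyc_succ m) {i \<in> I. cyc_succ m i \<in> I}"
    using inj assms(2) by (auto intro: inj_on_subset)
  ultimately show ?thesis unfolding cyclic_adjacencies_def by (simp add: card_image)
qed

lemma cyclic_adjacencies_eq:
  assumes "I \<subseteq> {1..m}"
  shows "cyclic_adjacencies m I = adjacencies I + of_bool (1 \<in> I \<and> m \<in> I)"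
proof -
  have "{i \<in> I. cyc_succ m i \<in> I} = {i \<in> I. Suc i \<in> I} \<union> (if 1 \<in> I \<and> m \<in> I then {m} else {})"
    using assms unfolding cyc_succ_def by (auto split: if_splits)
  moreover have "finite I" using assms finite_subset by blast
  moreover have "m \<notin> {i \<in> I. Suc i \<in> I}" using assms by auto
  ultimately show ?thesis
    unfolding cyclic_adjacencies_def adjacencies_def by (simp add: card_insert_if)
qed

locale full_cycle_shift =
  fixes U :: "'a set" and \<pi> :: "'a \<Rightarrow> 'a" and A :: "nat \<Rightarrow> 'a set" and m :: nat and u :: 'a
  assumes system: "set_system U m A" and harmonic: "harmonic U m A"
    and permutes: "\<pi> permutes U" and shift: "\<forall>i\<in>{1..<m}. \<pi> ` A i = A (Suc i)"
    and card_U_le: "card U \<le> m" and u: "u \<in> U" and least_power_u: "least_power \<pi> u = m"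
begin

definition trace :: "'a \<Rightarrow> nat set" where
  "trace y = {i \<in> {1..m}. y \<in> A i}"

lemma finite_U: "finite U"
  using system unfolding set_system_def by blast

lemma A_subset: "i \<in> {1..m} \<Longrightarrow> A i \<subseteq> U"
  using system unfolding set_system_def by blast

lemma permutation: "permutation \<pi>"
  using finite_U permutes permutation_permutes by blast

lemma one_le_m: "1 \<le> m"
  using least_power_of_permutation(2)[OF permutation, of u] least_power_u by simp

lemma orbit_u: "(\<lambda>j. (\<pi> ^^ j) u) ` {..<m} = U"
  using orbit_eq_if_card_le_least_power[OF permutes finite_U u] card_U_le least_power_u by simp

lemma funpow_m:
  assumes "y \<in> U"
  shows "(\<pi> ^^ m) y = y"
proof -
  obtain j where "y = (\<pi> ^^ j) u" using assms orbit_u by blast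
  then show ?thesis
    using funpow_swap_apply[where f = \<pi> and n = m and j = j] least_power_u
      least_power_of_permutation(1)[OF permutation, of u] by simp
qed

lemma pi_in: "y \<in> U \<Longrightarrow> \<pi> y \<in> U"
  using permutes_in_image[OF permutes] by blast

lemma mem_A_iff:
  assumes "y \<in> U" "i \<in> {1..m}"
  shows "y \<in> A i \<longleftrightarrow> \<pi> y \<in> A (cyc_succ m i)"
proof (cases "i = m")
  case True
  have "(\<pi> ^^ (m - 1)) (\<pi> y) = (\<pi> ^^ Suc (m - 1)) y"
    by (simp only: funpow_Suc_right comp_apply)
  then have "(\<pi> ^^ (m - 1)) (\<pi> y) = y" using funpow_m[OF assms(1)] one_le_m by simp
  moreover have "A m = (\<pi> ^^ (m - 1)) ` A 1" using shift_funpow[OF shift, of m] one_le_m by simp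
  ultimately have "y \<in> A m \<longleftrightarrow> (\<pi> ^^ (m - 1)) (\<pi> y) \<in> (\<pi> ^^ (m - 1)) ` A 1" by simp
  also have "\<dots> \<longleftrightarrow> \<pi> y \<in> A 1"
    using permutes_inj_on[OF permutes_funpow[OF permutes]] pi_in[OF assms(1)] A_subset one_le_m
    by (intro inj_on_image_mem_iff) auto
  finally show ?thesis using True unfolding cyc_succ_def by simp
next
  case False
  with assms(2) have "A (Suc i) = \<pi> ` A i" using shift by simp
  then have "\<pi> y \<in> A (Suc i) \<longleftrightarrow> y \<in> A i"
    using permutes_inj_on[OF permutes] assms A_subset
    by (simp only:) (intro inj_on_image_mem_iff, auto)
  with False show ?thesis unfolding cyc_succ_def by simp
qed

lemma trace_subset: "trace y \<subseteq> {1..m}"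
  unfolding trace_def by blast

lemma finite_trace: "finite (trace y)"
  using trace_subset by (rule finite_subset) simp

lemma trace_pi:
  assumes "y \<in> U"
  shows "trace (\<pi> y) = cyc_succ m ` trace y"
proof
  have bij: "bij_betw (cyc_succ m) {1..m} {1..m}" using bij_betw_cyc_succ[OF one_le_m] .
  show "cyc_succ m ` trace y \<subseteq> trace (\<pi> y)"
    using mem_A_iff[OF assms] bij_betwE[OF bij] unfolding trace_def by auto
  show "trace (\<pi> y) \<subseteq> cyc_succ m ` trace y"
  proof
    fix j assume j: "j \<in> trace (\<pi> y)"
    then obtain i where "i \<in> {1..m}" "j = cyc_succ m i"
      using bij_betw_imp_surj_on[OF bij] trace_subset by blast
    with j show "j \<in> cyc_succ m ` trace y"
      using mem_A_iff[OF assms] unfolding trace_def by auto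
  qed
qed

lemma trace_invariants:
  assumes "y \<in> U"
  shows "card (trace y) = card (trace u)"
    and "cyclic_adjacencies m (trace y) = cyclic_adjacencies m (trace u)"
proof -
  have "card (trace ((\<pi> ^^ j) u)) = card (trace u) \<and>
      cyclic_adjacencies m (trace ((\<pi> ^^ j) u)) = cyclic_adjacencies m (trace u)" for j
  proof (induction j)
    case (Suc j)
    let ?y = "(\<pi> ^^ j) u"
    have "?y \<in> U" using permutes_in_funpow_image[OF permutes u] .
    then have T: "trace ((\<pi> ^^ Suc j) u) = cyc_succ m ` trace ?y" using trace_pi by simp
    have "inj_on (cyc_succ m) (trace ?y)"
      using bij_betw_imp_inj_on[OF bij_betw_cyc_succ[OF one_le_m]] trace_subset by (rule inj_on_subset)
    then have "card (trace ((\<pi> ^^ Suc j) u)) = card (trace ?y)" unfolding T by (rule card_image)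
    moreover have "cyclic_adjacencies m (trace ((\<pi> ^^ Suc j) u)) = cyclic_adjacencies m (trace ?y)"
      unfolding T by (rule cyclic_adjacencies_image_cyc_succ[OF one_le_m trace_subset])
    ultimately show ?case using Suc.IH by simp
  qed simp
  moreover obtain j where "y = (\<pi> ^^ j) u" using assms orbit_u by blast
  ultimately show "card (trace y) = card (trace u)"
    and "cyclic_adjacencies m (trace y) = cyclic_adjacencies m (trace u)" by simp_all
qed

lemma trace_if_run_decomp_eq:
  assumes "y \<in> U" "J \<subseteq> {1..m}" "run_decomp J = run_decomp (trace y)"
  shows "\<exists>z\<in>U. trace z = J"
proof -
  have HI_eq: "HI U A I = {z \<in> U. I \<subseteq> trace z}" if "I \<subseteq> {1..m}" for I
    using that unfolding HI_def trace_def by auto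
  have "card (HI U A J) = card (HI U A (trace y))"
    using harmonic[unfolded harmonic_def, rule_format, OF assms(2) trace_subset assms(3)] .
  moreover have "0 < card (HI U A (trace y))"
    using assms(1) HI_eq[OF trace_subset] finite_U by (auto simp: card_gt_0_iff)
  ultimately have "HI U A J \<noteq> {}" by auto
  then obtain z where "z \<in> U" "J \<subseteq> trace z" using HI_eq[OF assms(2)] by auto
  have "finite J" using assms(2) by (rule finite_subset) simp
  then have "card J = card (trace y)"
    using card_adjacencies_eq_if_run_decomp_eq(1)[OF _ finite_trace assms(3)] by blast
  also have "\<dots> = card (trace z)"
    using trace_invariants(1)[OF assms(1)] trace_invariants(1)[OF \<open>z \<in> U\<close>] by simp
  finally have "J = trace z" using card_subset_eq[OF finite_trace \<open>J \<subseteq> trace z\<close>] by simp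
  with \<open>z \<in> U\<close> show ?thesis by blast
qed

lemma wraps_iff_if_run_decomp_eq:
  assumes "y \<in> U" "J \<subseteq> {1..m}" "run_decomp J = run_decomp (trace y)"
  shows "1 \<in> J \<and> m \<in> J \<longleftrightarrow> 1 \<in> trace y \<and> m \<in> trace y"
proof -
  obtain z where "z \<in> U" "trace z = J" using trace_if_run_decomp_eq[OF assms] by blast
  then have "cyclic_adjacencies m J = cyclic_adjacencies m (trace y)"
    using trace_invariants(2)[OF \<open>z \<in> U\<close>] trace_invariants(2)[OF assms(1)] by simp
  moreover have "finite J" using assms(2) by (rule finite_subset) simp
  then have "adjacencies J = adjacencies (trace y)"
    using card_adjacencies_eq_if_run_decomp_eq(2)[OF _ finite_trace assms(3)] by blast
  ultimately show ?thesis
    using cyclic_adjacencies_eq[OF assms(2)] cyclic_adjacencies_eq[OF trace_subset, of y] by (simp add: of_bool_eq_iff)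
qed

lemma mem_trace_pi_iff:
  assumes "y \<in> U" "i \<in> {1..m}"
  shows "cyc_succ m i \<in> trace (\<pi> y) \<longleftrightarrow> i \<in> trace y"
  using trace_pi[OF assms(1)] bij_betw_imp_inj_on[OF bij_betw_cyc_succ[OF one_le_m]] assms(2)
    trace_subset inj_on_image_mem_iff by metis

lemma no_interval_trace:
  assumes "y \<in> U" "trace y = {1..e}" "2 \<le> e" "e + 2 \<le> m"
  shows False
proof -
  define x where "x = (\<pi> ^^ (m - 1)) y"
  have "x \<in> U" unfolding x_def using permutes_in_funpow_image[OF permutes assms(1)] .
  have "\<pi> x = (\<pi> ^^ Suc (m - 1)) y" unfolding x_def by simp
  then have "\<pi> x = y" using funpow_m[OF assms(1)] one_le_m by simp
  then have "trace x = {i \<in> {1..m}. cyc_succ m i \<in> {1..e}}"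
    using mem_trace_pi_iff[OF \<open>x \<in> U\<close>] trace_subset assms(2) by blast
  also have "\<dots> = {1..e - 1} \<union> {m}"
    using assms(3,4) unfolding cyc_succ_def by auto
  finally have trace_x: "trace x = {1..e - 1} \<union> {m}" .
  define J where "J = {1..e - 1} \<union> {e + 1}"
  have "run_decomp J = run_decomp {1..e - 1} + run_decomp {e + 1}"
    unfolding J_def by (rule run_decomp_separated_Un) (auto simp: separated_def)
  also have "\<dots> = run_decomp {1..e - 1} + run_decomp {m}" by (simp add: run_decomp_singleton)
  also have "\<dots> = run_decomp (trace x)"
    unfolding trace_x using assms(4) by (intro run_decomp_separated_Un[symmetric]) (auto simp: separated_def)
  finally have "run_decomp J = run_decomp (trace x)" .
  moreover have "J \<subseteq> {1..m}" unfolding J_def using assms(4) by auto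
  ultimately have "1 \<in> J \<and> m \<in> J \<longleftrightarrow> 1 \<in> trace x \<and> m \<in> trace x"
    using wraps_iff_if_run_decomp_eq[OF \<open>x \<in> U\<close>] by blast
  then show False unfolding J_def trace_x using assms(3,4) by auto
qed

lemma no_gapped_trace:
  assumes "y \<in> U" "1 \<in> trace y" "m \<notin> trace y" "trace y \<noteq> {1..Max (trace y)}"
  shows False
proof -
  define T where "T = trace y"
  define e where "e = Max T"
  have "T \<noteq> {}" "finite T" using assms(2) finite_trace unfolding T_def by auto
  then have "e \<in> T" unfolding e_def by simp
  have "T \<subseteq> {1..e}"
  proof
    fix x assume "x \<in> T"
    then show "x \<in> {1..e}"
      using trace_subset[of y] Max_ge[OF \<open>finite T\<close>] unfolding T_def e_def by auto
  qed
  have "e \<le> m" "e \<noteq> m" using \<open>e \<in> T\<close> assms(3) trace_subset[of y] unfolding T_def by auto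
  then have "e < m" by simp
  define g where "g = Max ({1..e} - T)"
  have "{1..e} - T \<noteq> {}" using \<open>T \<subseteq> {1..e}\<close> assms(4) unfolding T_def e_def by blast
  then have "g \<in> {1..e} - T" unfolding g_def by (intro Max_in) auto
  with assms(2) \<open>e \<in> T\<close> have "1 < g" "g < e" "g \<notin> T" unfolding T_def by (auto simp: le_less)
  have "x \<in> T" if "g < x" "x \<le> e" for x
  proof (rule ccontr)
    assume "x \<notin> T"
    with that \<open>1 < g\<close> have "x \<le> g" unfolding g_def by (intro Max_ge) auto
    with that show False by simp
  qed
  define T1 where "T1 = {x \<in> T. x < g}"
  have T_eq: "T = T1 \<union> {g + 1..e}"
  proof
    show "T \<subseteq> T1 \<union> {g + 1..e}"
    proof
      fix x assume "x \<in> T"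
      then have "x \<le> e" "x \<noteq> g" using \<open>T \<subseteq> {1..e}\<close> \<open>g \<notin> T\<close> by auto
      with \<open>x \<in> T\<close> show "x \<in> T1 \<union> {g + 1..e}" unfolding T1_def by auto
    qed
    show "T1 \<union> {g + 1..e} \<subseteq> T"
      using \<open>\<And>x. g < x \<Longrightarrow> x \<le> e \<Longrightarrow> x \<in> T\<close> unfolding T1_def by auto
  qed
  have "finite T1" "1 \<in> T1" using \<open>finite T\<close> assms(2) \<open>1 < g\<close> unfolding T1_def T_def by auto
  define J where "J = T1 \<union> {g + 1 + (m - e)..m}"
  have "run_decomp J = run_decomp T1 + run_decomp {g + 1 + (m - e)..m}"
    unfolding J_def using \<open>finite T1\<close>
    by (intro run_decomp_separated_Un) (auto simp: separated_def T1_def)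
  also have "run_decomp {g + 1 + (m - e)..m} = run_decomp {g + 1..e}"
    using \<open>g < e\<close> \<open>e < m\<close> by (simp add: run_decomp_atLeastAtMost)
  also have "run_decomp T1 + \<dots> = run_decomp T"
    unfolding T_eq using \<open>finite T1\<close>
    by (intro run_decomp_separated_Un[symmetric]) (auto simp: separated_def T1_def)
  finally have "run_decomp J = run_decomp (trace y)" unfolding T_def .
  moreover have "J \<subseteq> {1..m}" unfolding J_def T1_def T_def using trace_subset by auto
  ultimately have "1 \<in> J \<and> m \<in> J \<longleftrightarrow> 1 \<in> trace y \<and> m \<in> trace y"
    using wraps_iff_if_run_decomp_eq[OF assms(1)] by blast
  then show False unfolding J_def using \<open>1 \<in> T1\<close> \<open>g < e\<close> \<open>e < m\<close> assms(3) by auto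
qed

lemma card_trace_extreme:
  assumes "y \<in> U" "1 \<in> trace y" "m \<notin> trace y"
  shows "card (trace y) = 1 \<or> card (trace y) + 1 = m"
proof (rule ccontr)
  assume "\<not> ?thesis"
  moreover have "card (trace y) \<noteq> 0" using assms(2) finite_trace by auto
  moreover have "trace y \<subseteq> {1..m} - {m}" using trace_subset assms(3) by auto
  then have "card (trace y) \<le> m - 1" using card_mono[of "{1..m} - {m}"] one_le_m by simp
  ultimately have card: "2 \<le> card (trace y)" "card (trace y) + 2 \<le> m" by auto
  define e where "e = Max (trace y)"
  show False
  proof (cases "trace y = {1..e}")
    case True
    then have "card (trace y) = e" by simp
    with True card show False using no_interval_trace[OF assms(1)] by simp
  next
    case False
    then show False using no_gapped_trace[OF assms] unfolding e_def by blast
  qed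
qed

lemma iso_singletons_if_card_trace_eq_1:
  assumes "y \<in> A 1" "card (trace y) = 1"
  shows "iso_sys U A {1..m} (\<lambda>i. {i}) m"
proof (intro iso_sys_singletons[OF finite_U card_U_le] ballI conjI)
  have "y \<in> U" using assms(1) A_subset one_le_m by auto
  show "\<exists>!i. i \<in> {1..m} \<and> z \<in> A i" if "z \<in> U" for z
    using trace_invariants(1)[OF that] trace_invariants(1)[OF \<open>y \<in> U\<close>] assms(2)
    unfolding trace_def by (intro ex1_if_card_Collect_eq_1) simp
  show "A i \<subseteq> U" "A i \<noteq> {}" if "i \<in> {1..m}" for i
    using shift_funpow[OF shift that] assms(1) A_subset[OF that] by auto
qed

lemma iso_compl_singletons_if_card_trace_eq:
  assumes "y \<in> U" "\<pi> y \<notin> A 1" "card (trace y) + 1 = m"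
  shows "iso_sys U A {1..m} (compl_sys {1..m} (\<lambda>i. {i})) m"
proof -
  have "iso_sys U (compl_sys U A) {1..m} (\<lambda>i. {i}) m"
  proof (intro iso_sys_singletons[OF finite_U card_U_le] ballI conjI)
    show "\<exists>!i. i \<in> {1..m} \<and> z \<in> compl_sys U A i" if "z \<in> U" for z
    proof -
      have "{i \<in> {1..m}. z \<in> compl_sys U A i} = {1..m} - trace z"
        using that unfolding compl_sys_def trace_def by auto
      moreover have "card ({1..m} - trace z) = 1"
        using trace_invariants(1)[OF that] trace_invariants(1)[OF assms(1)] assms(3)
          card_Diff_subset[OF finite_trace trace_subset, of z] by simp
      ultimately show ?thesis by (intro ex1_if_card_Collect_eq_1) simp
    qed
    show "compl_sys U A i \<subseteq> U" for i unfolding compl_sys_def by blast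
    show "compl_sys U A i \<noteq> {}" if "i \<in> {1..m}" for i
    proof -
      have "(\<pi> ^^ (i - 1)) (\<pi> y) \<notin> (\<pi> ^^ (i - 1)) ` A 1"
        using assms(2) A_subset one_le_m pi_in[OF assms(1)]
          inj_on_image_mem_iff[OF permutes_inj_on[OF permutes_funpow[OF permutes]]] by auto
      then show ?thesis using shift_funpow[OF shift that] pi_in[OF assms(1)]
          permutes_in_funpow_image[OF permutes] unfolding compl_sys_def by blast
    qed
  qed
  then show ?thesis using A_subset by (intro iso_sys_compl) auto
qed

lemma full_cycle_cases:
  assumes "\<pi> ` A 1 \<noteq> A 1"
  shows "iso_sys U A {1..m} (\<lambda>i. {i}) m \<or> iso_sys U A {1..m} (compl_sys {1..m} (\<lambda>i. {i})) m"
proof -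
  have "A 1 \<subseteq> U" using A_subset one_le_m by simp
  then have "finite (A 1)" "inj_on \<pi> (A 1)"
    using permutes_inj_on[OF permutes] finite_U by (auto intro: inj_on_subset finite_subset)
  then obtain y where "y \<in> A 1" "\<pi> y \<notin> A 1" using assms by (rule ex_escaping_if_not_invariant)
  with \<open>A 1 \<subseteq> U\<close> have "y \<in> U" by blast
  have "1 \<in> trace y" unfolding trace_def using \<open>y \<in> A 1\<close> one_le_m by simp
  moreover have "m \<notin> trace y"
    using mem_A_iff[OF \<open>y \<in> U\<close>, of m] \<open>\<pi> y \<notin> A 1\<close> one_le_m unfolding trace_def cyc_succ_def by simp
  ultimately show ?thesis
    using card_trace_extreme[OF \<open>y \<in> U\<close>] iso_singletons_if_card_trace_eq_1[OF \<open>y \<in> A 1\<close>]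
      iso_compl_singletons_if_card_trace_eq[OF \<open>y \<in> U\<close> \<open>\<pi> y \<notin> A 1\<close>] by blast
qed

end

section \<open>The exceptional systems\<close>

lemma bij_betw_if_image_eq:
  assumes "finite V" "\<tau> ` V = U" "card U = card V"
  shows "bij_betw \<tau> V U"
  using assms eq_card_imp_inj_on unfolding bij_betw_def by metis

lemma two_cycle_points:
  assumes "\<pi> permutes U" "finite U" "card U \<le> 3" "y \<in> U" "\<pi> y \<noteq> y" "\<pi> (\<pi> y) = y"
  obtains "U = {y, \<pi> y}" | w where "U = {y, \<pi> y, w}" "card U = 3" "\<pi> w = w"
proof (cases "U = {y, \<pi> y}")
  case False
  have "\<pi> y \<in> U" using permutes_in_image[OF assms(1)] assms(4) by simp
  with False assms(4) obtain w where "w \<in> U" "w \<noteq> y" "w \<noteq> \<pi> y" by blast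
  have "card {y, \<pi> y, w} = 3" using \<open>w \<noteq> y\<close> \<open>w \<noteq> \<pi> y\<close> assms(5) by simp
  then have U: "U = {y, \<pi> y, w}"
    using card_seteq[OF assms(2), of "{y, \<pi> y, w}"] assms(3,4) \<open>\<pi> y \<in> U\<close> \<open>w \<in> U\<close> by simp
  have "\<pi> w \<noteq> \<pi> (\<pi> y)" "\<pi> w \<noteq> \<pi> y"
    using \<open>w \<noteq> y\<close> \<open>w \<noteq> \<pi> y\<close> permutes_inj[OF assms(1)] by (auto dest: injD)
  then have "\<pi> w = w" using permutes_in_image[OF assms(1)] \<open>w \<in> U\<close> assms(6) U by auto
  with U \<open>card {y, \<pi> y, w} = 3\<close> show thesis using that(2) by simp
qed (use that(1) in simp)

lemma two_cycle_iso:
  assumes "\<pi> permutes U" "finite U" "card U \<le> 3" "\<forall>i\<in>{1..<3}. \<pi> ` A i = A (Suc i)"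
    and "A 1 \<subseteq> U" "y \<in> A 1" "\<pi> y \<notin> A 1" "\<pi> (\<pi> y) = y"
  shows "iso_sys U A {1..2::nat} (fam [{1}, {2}, {1}]) 3
    \<or> iso_sys U A {1..3::nat} (fam [{1}, {2}, {1}]) 3
    \<or> iso_sys U A {1..3::nat} (fam [{1,2}, {2,3}, {1,2}]) 3"
proof -
  have A: "A 2 = \<pi> ` A 1" "A 3 = \<pi> ` A 2"
    using assms(4) by (auto simp: numeral_2_eq_2 numeral_3_eq_3)
  have "y \<in> U" "y \<noteq> \<pi> y" using assms(5-7) by auto
  have three: "{1..3::nat} = {1, 2, 3}" "{1..2::nat} = {1, 2}" by auto
  from assms(1-3) \<open>y \<in> U\<close> \<open>y \<noteq> \<pi> y\<close>[symmetric] assms(8) show ?thesis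
  proof (cases rule: two_cycle_points)
    case 1
    with assms(5-7) have "A 1 = {y}" by auto
    with A assms(8) have "A 1 = {y}" "A 2 = {\<pi> y}" "A 3 = {y}" by simp_all
    moreover have "bij_betw (\<lambda>i::nat. if i = 1 then y else \<pi> y) {1..2} U"
      using 1 \<open>y \<noteq> \<pi> y\<close> by (intro bij_betw_if_image_eq, unfold three) auto
    ultimately have "iso_sys U A {1..2::nat} (fam [{1}, {2}, {1}]) 3"
      by (intro iso_sys_if_inverse, unfold three) (auto simp: fam_def)
    then show ?thesis by blast
  next
    case (2 w)
    show ?thesis
    proof (cases "w \<in> A 1")
      case False
      with assms(5-7) 2 have "A 1 = {y}" by auto
      with A assms(8) have "A 1 = {y}" "A 2 = {\<pi> y}" "A 3 = {y}" by simp_all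
      moreover have "bij_betw (\<lambda>i::nat. if i = 1 then y else if i = 2 then \<pi> y else w) {1..3} U"
        using 2 by (intro bij_betw_if_image_eq, unfold three) auto
      ultimately have "iso_sys U A {1..3::nat} (fam [{1}, {2}, {1}]) 3"
        by (intro iso_sys_if_inverse, unfold three) (auto simp: fam_def)
      then show ?thesis by blast
    next
      case True
      with assms(5-7) 2 have "A 1 = {y, w}" by auto
      with A assms(8) 2 have "A 1 = {y, w}" "A 2 = {\<pi> y, w}" "A 3 = {y, w}" by simp_all
      moreover have "bij_betw (\<lambda>i::nat. if i = 1 then y else if i = 2 then w else \<pi> y) {1..3} U"
        using 2 by (intro bij_betw_if_image_eq, unfold three) auto
      ultimately have "iso_sys U A {1..3::nat} (fam [{1,2}, {2,3}, {1,2}]) 3"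
        by (intro iso_sys_if_inverse, unfold three) (auto simp: fam_def)
      then show ?thesis by blast
    qed
  qed
qed

lemma shift_compl_sys:
  assumes "\<pi> permutes U" "\<forall>i\<in>{1..<m}. \<pi> ` A i = A (Suc i)" "\<forall>i\<in>{1..m}. A i \<subseteq> U"
  shows "\<forall>i\<in>{1..<m}. \<pi> ` compl_sys U A i = compl_sys U A (Suc i)"
proof
  fix i assume "i \<in> {1..<m}"
  have "\<pi> ` (U - A i) = \<pi> ` U - \<pi> ` A i"
    using permutes_inj_on[OF assms(1)] assms(3) \<open>i \<in> {1..<m}\<close> by (intro inj_on_image_set_diff) auto
  then show "\<pi> ` compl_sys U A i = compl_sys U A (Suc i)"
    unfolding compl_sys_def using permutes_image[OF assms(1)] assms(2) \<open>i \<in> {1..<m}\<close> by simp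
qed

lemma five_iso_base:
  assumes "\<forall>i\<in>{1..<5}. \<pi> ` A i = A (Suc i)" "A 1 = {u, v}"
    and "\<pi> (\<pi> u) = u" "\<pi> (\<pi> (\<pi> v)) = v"
    and "finite U" "U = {u, \<pi> u, v, \<pi> v, \<pi> (\<pi> v)}" "card U = 5"
  shows "iso_sys U A {1..5::nat} (fam [{1,4}, {2,5}, {1,3}, {4,5}, {1,2}]) 5"
proof -
  have "A 2 = \<pi> ` A 1" "A 3 = \<pi> ` A 2" "A 4 = \<pi> ` A 3" "A 5 = \<pi> ` A 4"
    using assms(1) by (auto simp: eval_nat_numeral)
  then have A: "A 2 = {\<pi> u, \<pi> v}" "A 3 = {u, \<pi> (\<pi> v)}" "A 4 = {\<pi> u, v}" "A 5 = {u, \<pi> v}"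
    using assms(2-4) by simp_all
  define \<tau> :: "nat \<Rightarrow> 'a" where "\<tau> i = [u, \<pi> v, \<pi> (\<pi> v), v, \<pi> u] ! (i - 1)" for i
  have five: "{1..5::nat} = {1, 2, 3, 4, 5}" by auto
  have "bij_betw \<tau> {1..5} U"
    using assms(6,7) by (intro bij_betw_if_image_eq, unfold five) (auto simp: \<tau>_def)
  then show ?thesis
    using assms(2) A by (intro iso_sys_if_inverse, unfold five) (auto simp: fam_def \<tau>_def)
qed

lemma five_iso:
  assumes "\<pi> permutes U" "finite U" "card U \<le> 5" "\<forall>i\<in>{1..<5}. \<pi> ` A i = A (Suc i)"
    and "\<forall>i\<in>{1..5}. A i \<subseteq> U"
    and "u \<in> A 1" "\<pi> u \<notin> A 1" "least_power \<pi> u = 2"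
    and "v \<in> A 1" "\<pi> v \<notin> A 1" "least_power \<pi> v = 3"
  shows "iso_sys U A {1..5::nat} (fam [{1,4}, {2,5}, {1,3}, {4,5}, {1,2}]) 5
    \<or> iso_sys U A {1..5::nat} (compl_sys {1..5} (fam [{1,4}, {2,5}, {1,3}, {4,5}, {1,2}])) 5"
proof -
  have perm: "permutation \<pi>" using assms(1,2) permutation_permutes by blast
  have "A 1 \<subseteq> U" using assms(5) by simp
  then have "u \<in> U" "v \<in> U" using assms(6,9) by auto
  have "(\<pi> ^^ 2) u = u" "(\<pi> ^^ 3) v = v"
    using least_power_of_permutation(1)[OF perm] assms(8,11) by metis+
  then have uu: "\<pi> (\<pi> u) = u" and vvv: "\<pi> (\<pi> (\<pi> v)) = v" by (simp_all add: eval_nat_numeral)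
  have "(\<pi> ^^ 1) u \<noteq> u" "(\<pi> ^^ 1) v \<noteq> v" "(\<pi> ^^ 2) v \<noteq> v"
    using least_power_le[where f = \<pi> and n = 1 and x = u] least_power_le[where f = \<pi> and n = 1 and x = v]
      least_power_le[where f = \<pi> and n = 2 and x = v] assms(8,11)
    by auto
  then have "u \<noteq> \<pi> u" "v \<noteq> \<pi> v" "v \<noteq> \<pi> (\<pi> v)" "\<pi> v \<noteq> \<pi> (\<pi> v)"
    using permutes_inj[OF assms(1)] by (auto simp: eval_nat_numeral dest: injD)
  moreover have "least_power \<pi> (\<pi> u) = 2" "least_power \<pi> (\<pi> v) = 3" "least_power \<pi> (\<pi> (\<pi> v)) = 3"
    using least_power_funpow[OF perm, of 1 u] least_power_funpow[OF perm, of 1 v]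
      least_power_funpow[OF perm, of 2 v] assms(8,11) by (simp_all add: eval_nat_numeral)
  ultimately have card: "card {u, \<pi> u, v, \<pi> v, \<pi> (\<pi> v)} = 5"
    using assms(8,11) by (auto simp: card_insert_if)
  have "{u, \<pi> u, v, \<pi> v, \<pi> (\<pi> v)} \<subseteq> U"
    using \<open>u \<in> U\<close> \<open>v \<in> U\<close> permutes_in_image[OF assms(1)] by auto
  then have "{u, \<pi> u, v, \<pi> v, \<pi> (\<pi> v)} = U"
    using card_seteq[OF assms(2)] assms(3) card by simp
  then have U: "U = {u, \<pi> u, v, \<pi> v, \<pi> (\<pi> v)}" "card U = 5" using card by auto
  show ?thesis
  proof (cases "\<pi> (\<pi> v) \<in> A 1")
    case False
    then have "A 1 = {u, v}" using \<open>A 1 \<subseteq> U\<close> U(1) assms(6,7,9,10) by auto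
    then show ?thesis using five_iso_base[OF assms(4) _ uu vvv assms(2) U] by blast
  next
    case True
    then have compl_1: "compl_sys U A 1 = {\<pi> u, \<pi> v}"
      using \<open>A 1 \<subseteq> U\<close> U(1) assms(6,7,9,10) unfolding compl_sys_def by auto
    have U': "U = {\<pi> u, \<pi> (\<pi> u), \<pi> v, \<pi> (\<pi> v), \<pi> (\<pi> (\<pi> v))}" using U(1) uu vvv by auto
    have "\<pi> (\<pi> (\<pi> u)) = \<pi> u" "\<pi> (\<pi> (\<pi> (\<pi> v))) = \<pi> v" using uu vvv by simp_all
    then have "iso_sys U (compl_sys U A) {1..5::nat} (fam [{1,4}, {2,5}, {1,3}, {4,5}, {1,2}]) 5"
      using five_iso_base[OF shift_compl_sys[OF assms(1,4,5)] compl_1 _ _ assms(2) U' U(2)] by simp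
    then show ?thesis using iso_sys_compl assms(5) by blast
  qed
qed

theorem lemma5p7:
  fixes U :: "'a set" and A :: "nat \<Rightarrow> 'a set" and m :: nat
  assumes "set_system U m A"
    and "harmonic U m A"
    and "card U \<le> m"
  shows "(\<forall>i\<in>{1..m}. \<forall>j\<in>{1..m}. A i = A j)
    \<or> iso_sys U A {1..m} (\<lambda>i. {i}) m
    \<or> iso_sys U A {1..m} (compl_sys {1..m} (\<lambda>i. {i})) m
    \<or> (m = 3 \<and> (iso_sys U A {1..2::nat} (fam [{1}, {2}, {1}]) m
                \<or> iso_sys U A {1..3::nat} (fam [{1}, {2}, {1}]) m
                \<or> iso_sys U A {1..3::nat} (fam [{1,2}, {2,3}, {1,2}]) m))
    \<or> (m = 5 \<and> (iso_sys U A {1..5::nat} (fam [{1,4}, {2,5}, {1,3}, {4,5}, {1,2}]) m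
                \<or> iso_sys U A {1..5::nat}
                    (compl_sys {1..5} (fam [{1,4}, {2,5}, {1,3}, {4,5}, {1,2}])) m))"
proof -
  obtain \<pi> where \<pi>: "\<pi> permutes U" and shift: "\<forall>i\<in>{1..<m}. \<pi> ` A i = A (Suc i)"
    using harmonic_imp_shift_permutation[OF assms(1,2)] by blast
  have "finite U" and A_U: "\<forall>i\<in>{1..m}. A i \<subseteq> U" using assms(1) unfolding set_system_def by auto
  consider "\<pi> ` A 1 = A 1" | u where "u \<in> U" "least_power \<pi> u = m"
    | y where "m = 3" "y \<in> A 1" "\<pi> y \<notin> A 1" "\<pi> (\<pi> y) = y"
    | u v where "m = 5" "u \<in> A 1" "v \<in> A 1" "\<pi> u \<notin> A 1" "\<pi> v \<notin> A 1"
        "least_power \<pi> u = 2" "least_power \<pi> v = 3"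
    using shift_permutation_cases[OF assms \<pi> shift] by blast
  then show ?thesis
  proof cases
    case 1
    then show ?thesis using all_eq_if_shift_invariant[OF shift] by blast
  next
    case (2 u)
    interpret full_cycle_shift U \<pi> A m u
      by unfold_locales (use assms \<pi> shift 2 in auto)
    show ?thesis using full_cycle_cases all_eq_if_shift_invariant[OF shift] by blast
  next
    case (3 y)
    then have "card U \<le> 3" "\<forall>i\<in>{1..<3}. \<pi> ` A i = A (Suc i)" "A 1 \<subseteq> U"
      using assms(3) shift A_U by auto
    from two_cycle_iso[OF \<pi> \<open>finite U\<close> this 3(2-4)] show ?thesis using \<open>m = 3\<close> by auto
  next
    case (4 u v)
    then have "card U \<le> 5" "\<forall>i\<in>{1..<5}. \<pi> ` A i = A (Suc i)" "\<forall>i\<in>{1..5}. A i \<subseteq> U"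
      using assms(3) shift A_U by auto
    from five_iso[OF \<pi> \<open>finite U\<close> this 4(2,4,6,3,5,7)] show ?thesis using \<open>m = 5\<close> by auto
  qed
qed

end
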